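(* Let $L$ be a minimal aperiodic shift with zero topological entropy, and let $(n_s)_{s\in\mathbb N}$ be a sequence of integers $\ge 2$ with $\lim_s p_L(n_s)/p_L(n_s-1)=1$ (such a sequence exists). Then: (1) there is a subsequence $(m_i)$ of $(n_s)$ such that for every $u\in Fact_L$ the limit $M_u=\lim_{i\to\infty}p_L(u,m_i)/p_L(m_i)$ exists, and $\mu(Cyl_L(u))=M_u$ extends to a $\sigma$-invariant nonatomic Borel probability measure $\mu$ on $L$; (2) the maps $T_{m_i}$ converge pointwise on a subset of $I$ of full Lebesgue measure to a map $T$ which equals, Lebesgue-almost everywhere, the map $T_L$ constructed from $(L,\mu)$.
   Context: $A$ is a finite totally ordered alphabet. $A^{\mathbb N}$ has the lexicographic order and the Cantor topology, and $\sigma$ deletes the first letter. A shift is a closed $L\subseteq A^{\mathbb N}$ with $\sigma(L)\subseteq L$. It is minimal if it has no nonempty proper closed invariant subset, and aperiodic if it is not the orbit of one periodic word. Its topological entropy is $\lim\log p_L(n)/n$. $Fact_L(n)$ is the set of length-$n$ factors, $p_L(n)=|Fact_L(n)|$, $Fact_L(u,n)$ is the set of $v\in Fact_L(n)$ having $u$ as prefix, and $p_L(u,n)=|Fact_L(u,n)|$. We write $Cyl_L(u)=\{w\in L:u\text{ prefix of }w\}$ and $I=[0,1)$. The maps $T_n$ ($n>1$). Divide $I$ into $p_L(n)$ right-open intervals of equal length and label them, from left to right, by the elements of $Fact_L(n)$ in lexicographic order; call $J_v$ the interval labelled $v$. Similarly divide $I$ into $p_L(n-1)$ equal right-open intervals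 $J'_u$ labelled by $Fact_L(n-1)$. Then $T_n:I\to I$ is the map that, for each $v\in Fact_L(n)$, maps $J_v$ affinely and increasingly, with slope $p_L(n)/p_L(n-1)$, onto $J'_{\sigma(v)}$, where $\sigma(v)$ is $v$ with its first letter removed. Construction (for the measure $\mu$). For $w\le w'$ in $L$, $[w,w']=\{w''\in L:w\le w''\le w'\}$, and $w_{L,min}=\min L$. Put $\phi_\mu(w)=\mu([w_{L,min},w])$. Let $Z_0$ be the set of $x\in[0,1]$ with $|\phi_\mu^{-1}(x)|\ge 2$; each such preimage consists of exactly two consecutive words. Let $\hat I=[0,1]\sqcup Z_0^-$, where $Z_0^-=\{z^-:z\in Z_0\}$ is a disjoint copy of $Z_0$. Order $\hat I$ so that $z^-<z$ with nothing in between, extending the order of $[0,1]$, and give it the order topology. Let $\iota$ be the inclusion $[0,1]\to\hat I$, and let $\kappa:\hat I\to[0,1]$ be the identity on $[0,1]$ with $z^-\mapsto z$. Define $\phi(w)=(\phi_\mu(w))^-$ if $\phi_\mu^{-1}(\phi_\mu(w))=\{w,w'\}$ with $w<w'$, and $\phi(w)=\phi_\mu(w)$ otherwise. Set $\hat T=\phi\circ\sigma\circ\phi^{-1}$ and $T_L=\kappa\circ\hat T\circ\iota:[0,1]\to[0,1]$. *)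

theory Defs
  imports "HOL-Probability.Probability"
begin

(* Alphabet A = {0..<k} with the usual order on nat (any finite total order is
   order-isomorphic to such an initial segment). Infinite words are functions
   nat => nat; the type nat => nat carries the product topology (Function_Topology),
   and A^N = {w. \<forall>i. w i < k} with the subspace topology is the Cantor space. *)

type_synonym word = "nat \<Rightarrow> nat"

definition alph_words :: "nat \<Rightarrow> word set" where
  "alph_words k = {w. \<forall>i. w i < k}"

definition shift :: "word \<Rightarrow> word" where
  "shift w = (\<lambda>i. w (Suc i))"

definition word_less :: "word \<Rightarrow> word \<Rightarrow> bool" where
  "word_less w w' \<longleftrightarrow> (\<exists>i. (\<forall>j<i. w j = w' j) \<and> w i < w' i)"

definition word_le :: "word \<Rightarrow> word \<Rightarrow> bool" where
  "word_le w w' \<longleftrightarrow> w = w' \<or> word_less w w'"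

(* lexicographic order on finite words (used for words of equal length) *)
definition list_lex_less :: "nat list \<Rightarrow> nat list \<Rightarrow> bool" where
  "list_lex_less v v' \<longleftrightarrow>
     (\<exists>i. i < length v \<and> i < length v' \<and> take i v = take i v' \<and> v ! i < v' ! i)"

definition is_shift :: "nat \<Rightarrow> word set \<Rightarrow> bool" where
  "is_shift k L \<longleftrightarrow> L \<subseteq> alph_words k \<and> closed L \<and> shift ` L \<subseteq> L"

definition minimal_shift :: "nat \<Rightarrow> word set \<Rightarrow> bool" where
  "minimal_shift k L \<longleftrightarrow> is_shift k L \<and> L \<noteq> {} \<and>
     (\<forall>K. K \<subseteq> L \<and> K \<noteq> {} \<and> closed K \<and> shift ` K \<subseteq> K \<longrightarrow> K = L)"

definition aperiodic_shift :: "word set \<Rightarrow> bool" where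
  "aperiodic_shift L \<longleftrightarrow>
     \<not> (\<exists>w p. p > 0 \<and> (\<forall>i. w (i + p) = w i) \<and> L = {(shift ^^ j) w | j. True})"

definition Fact :: "word set \<Rightarrow> nat \<Rightarrow> nat list set" where
  "Fact L n = {map w [j..<j+n] | w j. w \<in> L}"

definition Facts :: "word set \<Rightarrow> nat list set" where
  "Facts L = (\<Union>n. Fact L n)"

definition pL :: "word set \<Rightarrow> nat \<Rightarrow> nat" where
  "pL L n = card (Fact L n)"

definition Fact_pref :: "word set \<Rightarrow> nat list \<Rightarrow> nat \<Rightarrow> nat list set" where
  "Fact_pref L u n = {v \<in> Fact L n. take (length u) v = u}"

definition pL_pref :: "word set \<Rightarrow> nat list \<Rightarrow> nat \<Rightarrow> nat" where
  "pL_pref L u n = card (Fact_pref L u n)"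

definition Cyl :: "word set \<Rightarrow> nat list \<Rightarrow> word set" where
  "Cyl L u = {w \<in> L. \<forall>i<length u. w i = u ! i}"

definition zero_entropy :: "word set \<Rightarrow> bool" where
  "zero_entropy L \<longleftrightarrow> ((\<lambda>n. ln (real (pL L n)) / real n) \<longlonglongrightarrow> 0)"

definition fact_rank :: "word set \<Rightarrow> nat \<Rightarrow> nat list \<Rightarrow> nat" where
  "fact_rank L n v = card {v' \<in> Fact L n. list_lex_less v' v}"

definition fact_of_rank :: "word set \<Rightarrow> nat \<Rightarrow> nat \<Rightarrow> nat list" where
  "fact_of_rank L n r = (THE v. v \<in> Fact L n \<and> fact_rank L n v = r)"

(* T_n: J_v = [r/p(n), (r+1)/p(n)) with r the rank of v, mapped affinely and
   increasingly with slope p(n)/p(n-1) onto J'_{sigma v}. *)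
definition T_map :: "word set \<Rightarrow> nat \<Rightarrow> real \<Rightarrow> real" where
  "T_map L n x =
     (let r = nat \<lfloor>x * real (pL L n)\<rfloor>;
          v = fact_of_rank L n r
      in (real (fact_rank L (n - 1) (tl v)) + (x * real (pL L n) - real r))
           / real (pL L (n - 1)))"

definition borel_prob_on :: "word set \<Rightarrow> word measure \<Rightarrow> bool" where
  "borel_prob_on L M \<longleftrightarrow> prob_space M \<and> sets M = sets (restrict_space borel L)"

definition shift_invariant :: "word set \<Rightarrow> word measure \<Rightarrow> bool" where
  "shift_invariant L M \<longleftrightarrow>
     (\<forall>B \<in> sets M. measure M (shift -` B \<inter> L) = measure M B)"

definition nonatomic :: "word set \<Rightarrow> word measure \<Rightarrow> bool" where
  "nonatomic L M \<longleftrightarrow> (\<forall>w \<in> L. measure M {w} = 0)"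

definition word_interval :: "word set \<Rightarrow> word \<Rightarrow> word \<Rightarrow> word set" where
  "word_interval L w w' = {w'' \<in> L. word_le w w'' \<and> word_le w'' w'}"

definition word_min :: "word set \<Rightarrow> word" where
  "word_min L = (THE w. w \<in> L \<and> (\<forall>w' \<in> L. word_le w w'))"

definition phi_mu :: "word set \<Rightarrow> word measure \<Rightarrow> word \<Rightarrow> real" where
  "phi_mu L M w = measure M (word_interval L (word_min L) w)"

definition Z0 :: "word set \<Rightarrow> word measure \<Rightarrow> real set" where
  "Z0 L M = {x \<in> {0..1}. \<exists>w \<in> L. \<exists>w' \<in> L. w \<noteq> w' \<and> phi_mu L M w = x \<and> phi_mu L M w' = x}"

(* The space \<hat>I = [0,1] \<squnion> Z0^- is represented inside real \<times> bool:
   (x, True) is the point x of [0,1], (z, False) is z^- for z \<in> Z0. *)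
definition Ihat :: "word set \<Rightarrow> word measure \<Rightarrow> (real \<times> bool) set" where
  "Ihat L M = ({0..1} \<times> {True}) \<union> (Z0 L M \<times> {False})"

definition iota :: "real \<Rightarrow> real \<times> bool" where
  "iota x = (x, True)"

definition kappa :: "real \<times> bool \<Rightarrow> real" where
  "kappa z = fst z"

definition phi_hat :: "word set \<Rightarrow> word measure \<Rightarrow> word \<Rightarrow> real \<times> bool" where
  "phi_hat L M w =
     (if \<exists>w'. word_less w w' \<and> {v \<in> L. phi_mu L M v = phi_mu L M w} = {w, w'}
      then (phi_mu L M w, False) else (phi_mu L M w, True))"

definition T_hat :: "word set \<Rightarrow> word measure \<Rightarrow> real \<times> bool \<Rightarrow> real \<times> bool" where
  "T_hat L M z = phi_hat L M (shift (inv_into L (phi_hat L M) z))"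

definition T_L :: "word set \<Rightarrow> word measure \<Rightarrow> real \<Rightarrow> real" where
  "T_L L M x = kappa (T_hat L M (iota x))"

end

theory Submission
  imports Defs
begin

text \<open>
  Along a subsequence of the lengths \<open>n\<^sub>s\<close>, the relative frequencies
  \<open>p\<^sub>L(u, n)/p\<^sub>L(n)\<close> converge for every word \<open>u\<close> (compactness of \<open>[0,1]\<close>-valued
  functions on words), and since \<open>p\<^sub>L(n\<^sub>s)/p\<^sub>L(n\<^sub>s - 1) \<rightarrow> 1\<close> the limit weights \<open>M u\<close> are
  additive under right as well as under left extension of \<open>u\<close>. Placing the cylinders of each
  length side by side in lexicographic order, as intervals \<open>[offset u, offset u + M u)\<close> of
  \<open>[0,1)\<close>, yields a coding map \<open>code : [0,1) \<rightarrow> L\<close>; the image of Lebesgue measure under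
  \<open>code\<close> is the invariant measure \<open>\<mu>\<close>, and \<open>\<phi>\<^sub>\<mu>\<close> inverts \<open>code\<close>. Minimality forces \<open>M\<close>
  to be positive on factors and to tend to \<open>0\<close> along every word of \<open>L\<close>, so \<open>\<mu>\<close> has no atoms
  and \<open>code x\<close> is the only word with \<open>\<phi>\<^sub>\<mu> = x\<close> unless \<open>x\<close> is one of the countably many
  offsets. For any other \<open>x\<close>, the map \<open>T\<^sub>m\<close> sends the intervals of the factors with prefix \<open>u\<close>
  into those of the factors with prefix \<open>tl u\<close>, a block whose endpoints converge to
  \<open>offset (tl u)\<close> and \<open>offset (tl u) + M (tl u)\<close>; letting \<open>u\<close> run through the prefixes of
  \<open>code x\<close> gives \<open>T\<^sub>m x \<rightarrow> \<phi>\<^sub>\<mu>(\<sigma>(code x)) = T\<^sub>L x\<close>.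
\<close>

lemma list_lex_less_irrefl: "\<not> list_lex_less v v"
  unfolding list_lex_less_def by auto

lemma list_lex_less_asym: "list_lex_less v v' \<Longrightarrow> \<not> list_lex_less v' v"
proof
  assume "list_lex_less v v'" "list_lex_less v' v"
  then obtain i j where i: "i < length v" "i < length v'" "take i v = take i v'" "v ! i < v' ! i"
    and j: "j < length v'" "j < length v" "take j v' = take j v" "v' ! j < v ! j"
    unfolding list_lex_less_def by blast
  show False
  proof (cases i j rule: linorder_cases)
    case less
    then have "v ! i = v' ! i" using j(3) i(1,2) by (metis nth_take)
    then show ?thesis using i(4) by simp
  next
    case equal then show ?thesis using i j by auto
  next
    case greater
    then have "v ! j = v' ! j" using i(3) j(1,2) by (metis nth_take)
    then show ?thesis using j(4) by simp
  qed
qed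

lemma list_lex_less_trans:
  assumes "list_lex_less u v" "list_lex_less v w" "length u = length v" "length v = length w"
  shows "list_lex_less u w"
proof -
  obtain i j where i: "i < length u" "take i u = take i v" "u ! i < v ! i"
    and j: "j < length v" "take j v = take j w" "v ! j < w ! j"
    using assms(1,2) unfolding list_lex_less_def by blast
  show ?thesis
  proof (cases i j rule: linorder_cases)
    case less
    have "take i v = take i w" using j(2) less by (metis min.strict_order_iff take_take)
    moreover have "v ! i = w ! i" using j(2) less i(1) assms(3,4) by (metis nth_take)
    ultimately show ?thesis using i assms(3,4) unfolding list_lex_less_def by (intro exI[of _ i]) auto
  next
    case equal
    then show ?thesis using i j assms(3,4) unfolding list_lex_less_def by (intro exI[of _ i]) auto
  next
    case greater
    have "take j u = take j v" using i(2) greater by (metis min.strict_order_iff take_take)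
    moreover have "u ! j = v ! j" using i(2) greater j(1) assms(3,4) by (metis nth_take)
    ultimately show ?thesis using j assms(3,4) unfolding list_lex_less_def by (intro exI[of _ j]) auto
  qed
qed

lemma list_lex_less_total:
  assumes "length v = length v'" "v \<noteq> v'"
  shows "list_lex_less v v' \<or> list_lex_less v' v"
proof -
  have ex: "\<exists>i. i < length v \<and> v ! i \<noteq> v' ! i" using assms nth_equalityI by blast
  define i where "i = (LEAST i. i < length v \<and> v ! i \<noteq> v' ! i)"
  have i: "i < length v" "v ! i \<noteq> v' ! i"
    using LeastI_ex[OF ex] unfolding i_def by auto
  have "\<forall>j<i. v ! j = v' ! j"
    using not_less_Least[of _ "\<lambda>i. i < length v \<and> v ! i \<noteq> v' ! i"] i
    unfolding i_def by (meson order.strict_trans)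
  then have "take i v = take i v'" using i assms by (intro nth_equalityI) auto
  then show ?thesis using i assms unfolding list_lex_less_def
    by (cases "v ! i < v' ! i") (auto intro!: exI[of _ i])
qed

lemma list_lex_less_of_take:
  assumes "length v = length v'" "list_lex_less (take l v) (take l v')"
  shows "list_lex_less v v'"
proof -
  obtain i where i: "i < length (take l v)" "take i (take l v) = take i (take l v')"
    "take l v ! i < take l v' ! i"
    using assms(2) unfolding list_lex_less_def by auto
  have il: "i < l" "i < length v" using i(1) by auto
  have "take i v = take i v'" using i(2) il by (simp add: min_def)
  moreover have "v ! i < v' ! i" using i(3) il by simp
  ultimately show ?thesis using il assms(1) unfolding list_lex_less_def by (intro exI[of _ i]) auto
qed

lemma list_lex_less_snoc_iff:
  assumes "length xs = length ys"
  shows "list_lex_less (xs @ [x]) (ys @ [y]) \<longleftrightarrow> list_lex_less xs ys \<or> (xs = ys \<and> x < y)"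
proof
  assume "list_lex_less (xs @ [x]) (ys @ [y])"
  then obtain i where i: "i < Suc (length xs)" "take i (xs @ [x]) = take i (ys @ [y])"
    "(xs @ [x]) ! i < (ys @ [y]) ! i" unfolding list_lex_less_def by auto
  show "list_lex_less xs ys \<or> (xs = ys \<and> x < y)"
  proof (cases "i < length xs")
    case True
    then have "take i xs = take i ys" "xs ! i < ys ! i" using i assms by (auto simp: nth_append)
    then show ?thesis using True assms unfolding list_lex_less_def by auto
  next
    case False
    then have "i = length xs" using i by simp
    then show ?thesis using i assms by (auto simp: nth_append)
  qed
next
  assume "list_lex_less xs ys \<or> (xs = ys \<and> x < y)"
  then show "list_lex_less (xs @ [x]) (ys @ [y])"
  proof
    assume "list_lex_less xs ys"
    then obtain i where "i < length xs" "i < length ys" "take i xs = take i ys" "xs ! i < ys ! i"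
      unfolding list_lex_less_def by auto
    then show ?thesis unfolding list_lex_less_def by (intro exI[of _ i]) (auto simp: nth_append)
  next
    assume "xs = ys \<and> x < y"
    then show ?thesis unfolding list_lex_less_def by (intro exI[of _ "length xs"]) auto
  qed
qed

lemma card_rank_less:
  assumes "finite F" "x \<in> F" "y \<in> F" "R x y"
    and trans: "\<forall>p\<in>F. \<forall>q\<in>F. \<forall>t\<in>F. R p q \<longrightarrow> R q t \<longrightarrow> R p t"
    and irrefl: "\<forall>p. \<not> R p p"
  shows "card {z \<in> F. R z x} < card {z \<in> F. R z y}"
proof (rule psubset_card_mono)
  show "finite {z \<in> F. R z y}" using assms(1) by simp
  have "{z \<in> F. R z x} \<subseteq> {z \<in> F. R z y}" using trans assms(2,3,4) by blast
  moreover have "x \<in> {z \<in> F. R z y}" "x \<notin> {z \<in> F. R z x}" using assms(2,4) irrefl by auto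
  ultimately show "{z \<in> F. R z x} \<subset> {z \<in> F. R z y}" by blast
qed

lemma bij_betw_rank:
  assumes "finite F"
    and trans: "\<forall>p\<in>F. \<forall>q\<in>F. \<forall>t\<in>F. R p q \<longrightarrow> R q t \<longrightarrow> R p t"
    and irrefl: "\<forall>p. \<not> R p p"
    and total: "\<forall>p\<in>F. \<forall>q\<in>F. p \<noteq> q \<longrightarrow> R p q \<or> R q p"
  shows "bij_betw (\<lambda>x. card {z \<in> F. R z x}) F {0..<card F}"
proof -
  let ?r = "\<lambda>x. card {z \<in> F. R z x}"
  have inj: "inj_on ?r F"
  proof (rule inj_onI, rule ccontr)
    fix x y assume xy: "x \<in> F" "y \<in> F" "?r x = ?r y" "x \<noteq> y"
    then consider "R x y" | "R y x" using total by blast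
    then show False
    proof cases
      case 1 then show False using card_rank_less[OF assms(1) xy(1,2) _ trans irrefl] xy(3) by simp
    next
      case 2 then show False using card_rank_less[OF assms(1) xy(2,1) _ trans irrefl] xy(3) by simp
    qed
  qed
  have "?r ` F \<subseteq> {0..<card F}"
  proof
    fix y assume "y \<in> ?r ` F"
    then obtain x where x: "x \<in> F" "y = ?r x" by auto
    have "{z \<in> F. R z x} \<subset> F" using x irrefl by auto
    then have "?r x < card F" using assms(1) psubset_card_mono by blast
    then show "y \<in> {0..<card F}" using x by simp
  qed
  moreover have "card (?r ` F) = card {0..<card F}" using card_image[OF inj] by simp
  ultimately have "?r ` F = {0..<card F}" by (simp add: card_subset_eq)
  then show ?thesis using inj by (simp add: bij_betw_def)
qed

lemma card_le_card_vimage: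
  assumes "finite A" "f ` A = B" "C \<subseteq> B"
  shows "card C \<le> card {x \<in> A. f x \<in> C}"
proof -
  have "f ` {x \<in> A. f x \<in> C} = C" using assms by auto
  then show ?thesis using card_image_le[of "{x \<in> A. f x \<in> C}" f] assms(1) by simp
qed

lemma card_vimage_le:
  assumes "finite A" "f ` A = B" "C \<subseteq> B"
  shows "card {x \<in> A. f x \<in> C} + card B \<le> card A + card C"
proof -
  have fB: "finite B" using assms by auto
  have "f ` {x \<in> A. f x \<in> B - C} = B - C" using assms by auto
  then have c2: "card (B - C) \<le> card {x \<in> A. f x \<in> B - C}"
    using card_image_le[of "{x \<in> A. f x \<in> B - C}" f] assms by auto
  have "card {x \<in> A. f x \<in> C} + card {x \<in> A. f x \<in> B - C} = card A"
  proof -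
    have "{x \<in> A. f x \<in> C} \<union> {x \<in> A. f x \<in> B - C} = A" using assms by auto
    moreover have "{x \<in> A. f x \<in> C} \<inter> {x \<in> A. f x \<in> B - C} = {}" by auto
    ultimately show ?thesis using assms(1) card_Un_disjoint
      by (metis (no_types, lifting) finite_Un)
  qed
  moreover have "card (B - C) + card C = card B"
    using card_Diff_subset[OF finite_subset[OF assms(3) fB] assms(3)] card_mono[OF fB assms(3)] by simp
  ultimately show ?thesis using c2 by linarith
qed

lemma funpow_shift: "(shift ^^ j) w = (\<lambda>i. w (i + j))"
  by (induction j arbitrary: w) (auto simp: shift_def funpow_Suc_right)

lemma map_upt_funpow_shift: "map w [j..<j+n] = map ((shift ^^ j) w) [0..<n]"
  by (induction n) (auto simp: funpow_shift add.commute)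

lemma map_upt_Suc_shift: "map w [0..<Suc l] = w 0 # map (shift w) [0..<l]"
  by (simp add: shift_def upt_conv_Cons map_Suc_upt[symmetric] comp_def del: upt_Suc)

definition word_cyl :: "nat list \<Rightarrow> word set" where
  "word_cyl u = {w. \<forall>i<length u. w i = u ! i}"

lemma word_cyl_iff: "w \<in> word_cyl u \<longleftrightarrow> map w [0..<length u] = u"
proof
  assume "w \<in> word_cyl u"
  then show "map w [0..<length u] = u"
    by (intro nth_equalityI) (auto simp: word_cyl_def)
next
  assume a: "map w [0..<length u] = u"
  have "w i = u ! i" if "i < length u" for i
    using that arg_cong[OF a, of "\<lambda>xs. xs ! i"] by simp
  then show "w \<in> word_cyl u" unfolding word_cyl_def by blast
qed

lemma word_in_cyl_prefix: "w \<in> word_cyl (map w [0..<l])"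
  by (simp add: word_cyl_iff)

lemma Cyl_eq_word_cyl: "Cyl L u = L \<inter> word_cyl u"
  unfolding Cyl_def word_cyl_def by auto

lemma open_word_cyl: "open (word_cyl u)"
proof -
  have "open {f :: word. \<forall>i\<in>{..<length u}. f (id i) \<in> {u ! i}}"
    by (rule product_topology_basis') (auto intro: discrete_topology_class.open_discrete)
  moreover have "{f :: word. \<forall>i\<in>{..<length u}. f (id i) \<in> {u ! i}} = word_cyl u"
    unfolding word_cyl_def by auto
  ultimately show ?thesis by simp
qed

lemma open_contains_word_cyl:
  assumes "open (U :: word set)" "w \<in> U"
  shows "\<exists>l. word_cyl (map w [0..<l]) \<subseteq> U"
proof -
  have "openin (product_topology (\<lambda>_. euclidean) UNIV) U" using assms open_fun_def by auto
  from product_topology_open_contains_basis[OF this assms(2)] obtain X where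
    X: "w \<in> Pi\<^sub>E UNIV X" "finite {i. X i \<noteq> topspace euclidean}" "Pi\<^sub>E UNIV X \<subseteq> U"
    by auto
  obtain l where l: "\<forall>i \<in> {i. X i \<noteq> UNIV}. i < l"
    using X(2) finite_nat_set_iff_bounded by auto
  have "word_cyl (map w [0..<l]) \<subseteq> Pi\<^sub>E UNIV X"
  proof
    fix z assume "z \<in> word_cyl (map w [0..<l])"
    then have "\<forall>i<l. z i = w i" unfolding word_cyl_def by auto
    then have "z i \<in> X i" for i using X(1) l by (cases "i < l") auto
    then show "z \<in> Pi\<^sub>E UNIV X" by auto
  qed
  then show ?thesis using X(3) by blast
qed

lemma Hausdorff_space_words: "Hausdorff_space (euclidean :: word topology)"
proof -
  have "Hausdorff_space (euclidean :: nat topology)"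
    unfolding Hausdorff_space_def disjnt_def by (metis hausdorff open_openin)
  then show ?thesis by (metis euclidean_product_topology Hausdorff_space_product_topology)
qed

lemma compact_imp_closed_words: "compact (S :: word set) \<Longrightarrow> closed S"
proof -
  assume "compact S"
  then have "compactin euclidean S" by (simp only: compactin_euclidean_iff)
  then have "closedin euclidean S" by (rule compactin_imp_closedin[OF Hausdorff_space_words])
  then show "closed S" unfolding closed_closedin .
qed

lemma finite_imp_closed_words: "finite (S :: word set) \<Longrightarrow> closed S"
  by (intro compact_imp_closed_words finite_imp_compact)

lemma continuous_on_shift: "continuous_on UNIV shift"
  unfolding shift_def by (intro continuous_on_coordinatewise_then_product) simp

lemma compact_alph_words: "compact (alph_words k)"
proof -
  have "alph_words k = PiE UNIV (\<lambda>_. {..<k})" unfolding alph_words_def by auto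
  moreover have "compactin (product_topology (\<lambda>_. euclidean) UNIV) (PiE UNIV (\<lambda>_::nat. {..<k}))"
    by (subst compactin_PiE) (auto intro: finite_imp_compact)
  ultimately show ?thesis by (simp add: euclidean_product_topology)
qed

lemma sets_borel_words: "sets (borel :: word measure) = sigma_sets UNIV (range word_cyl)"
proof -
  have "sigma_sets UNIV {S :: word set. open S} = sigma_sets UNIV (range word_cyl)"
  proof (rule sigma_sets_eqI)
    fix a :: "word set" assume "a \<in> {S. open S}"
    then have "open a" by simp
    have a: "a = \<Union> {word_cyl u | u. word_cyl u \<subseteq> a}"
    proof
      show "a \<subseteq> \<Union> {word_cyl u | u. word_cyl u \<subseteq> a}"
      proof
        fix w assume "w \<in> a"
        then obtain l where "word_cyl (map w [0..<l]) \<subseteq> a"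
          using open_contains_word_cyl \<open>open a\<close> by blast
        then show "w \<in> \<Union> {word_cyl u | u. word_cyl u \<subseteq> a}"
          using word_in_cyl_prefix[of w l] by blast
      qed
    qed blast
    have "countable {word_cyl u | u. word_cyl u \<subseteq> a}"
      by (rule countable_subset[of _ "range word_cyl"]) auto
    moreover have "{word_cyl u | u. word_cyl u \<subseteq> a} \<subseteq> sigma_sets UNIV (range word_cyl)"
      by (auto intro: sigma_sets.Basic)
    ultimately have "\<Union> {word_cyl u | u. word_cyl u \<subseteq> a} \<in> sigma_sets UNIV (range word_cyl)"
      by (intro sigma_algebra.countable_Union[OF sigma_algebra_sigma_sets]) auto
    then show "a \<in> sigma_sets UNIV (range word_cyl)" using a by simp
  next
    fix b assume "b \<in> range word_cyl"
    then show "b \<in> sigma_sets UNIV {S. open S}" using open_word_cyl by auto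
  qed
  then show ?thesis by (simp add: sets_borel)
qed

lemma inj_on_prefixes:
  assumes "finite (F :: word set)"
  shows "\<exists>l. inj_on (\<lambda>w. map w [0..<l]) F"
proof -
  define d where "d = (\<lambda>(w::word, w'::word). LEAST i. w i \<noteq> w' i)"
  define D where "D = d ` (F \<times> F)"
  have fD: "finite D" unfolding D_def using assms by simp
  define l where "l = Suc (Max (insert 0 D))"
  have "inj_on (\<lambda>w. map w [0..<l]) F"
  proof (rule inj_onI, rule ccontr)
    fix w w' assume ww: "w \<in> F" "w' \<in> F" "map w [0..<l] = map w' [0..<l]" "w \<noteq> w'"
    then have ex: "\<exists>i. w i \<noteq> w' i" by auto
    have dw: "w (d (w, w')) \<noteq> w' (d (w, w'))" unfolding d_def using LeastI_ex[OF ex] by simp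
    have "d (w, w') \<in> D" unfolding D_def using ww by auto
    then have "d (w, w') < l" using fD unfolding l_def by (simp add: le_imp_less_Suc)
    then show False using ww(3) dw by (simp add: map_eq_conv)
  qed
  then show ?thesis by blast
qed

lemma word_less_irrefl: "\<not> word_less w w"
  unfolding word_less_def by auto

lemma word_less_asym: "word_less w w' \<Longrightarrow> \<not> word_less w' w"
proof
  assume "word_less w w'" "word_less w' w"
  then obtain i j where i: "\<forall>j<i. w j = w' j" "w i < w' i" and j: "\<forall>i<j. w' i = w i" "w' j < w j"
    unfolding word_less_def by blast
  show False by (cases i j rule: linorder_cases) (use i j in auto)
qed

lemma word_less_total: "w \<noteq> w' \<Longrightarrow> word_less w w' \<or> word_less w' w"
proof -
  assume "w \<noteq> w'"
  then have ex: "\<exists>i. w i \<noteq> w' i" by auto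
  define i where "i = (LEAST i. w i \<noteq> w' i)"
  have "w i \<noteq> w' i" using LeastI_ex[OF ex] i_def by simp
  moreover have "\<forall>j<i. w j = w' j" using not_less_Least i_def by blast
  ultimately show ?thesis unfolding word_less_def by (metis linorder_neqE_nat)
qed

lemma word_less_iff_prefix:
  "word_less w w' \<longleftrightarrow> (\<exists>l. list_lex_less (map w [0..<l]) (map w' [0..<l]))"
proof
  assume "word_less w w'"
  then obtain i where i: "\<forall>j<i. w j = w' j" "w i < w' i" unfolding word_less_def by blast
  have "take i (map w [0..<Suc i]) = take i (map w' [0..<Suc i])" using i(1) by (simp add: take_map)
  then show "\<exists>l. list_lex_less (map w [0..<l]) (map w' [0..<l])"
    using i(2) unfolding list_lex_less_def by (intro exI[of _ "Suc i"] exI[of _ i]) (simp del: upt_Suc)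
next
  assume "\<exists>l. list_lex_less (map w [0..<l]) (map w' [0..<l])"
  then obtain l i where "i < l" "take i (map w [0..<l]) = take i (map w' [0..<l])" "w i < w' i"
    unfolding list_lex_less_def by auto
  then have "\<forall>j<i. w j = w' j" "w i < w' i" by (auto simp: take_map min_def map_eq_conv)
  then show "word_less w w'" unfolding word_less_def by blast
qed

lemma open_word_less: "open {w. word_less w z}"
proof (subst open_subopen, intro ballI)
  fix w assume "w \<in> {w. word_less w z}"
  then obtain l where l: "list_lex_less (map w [0..<l]) (map z [0..<l])"
    using word_less_iff_prefix by blast
  have "word_cyl (map w [0..<l]) \<subseteq> {w. word_less w z}"
  proof
    fix w' assume "w' \<in> word_cyl (map w [0..<l])"
    then have e: "map w' [0..<l] = map w [0..<l]" by (simp add: word_cyl_iff)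
    have "list_lex_less (map w' [0..<l]) (map z [0..<l])" unfolding e by (rule l)
    then show "w' \<in> {w. word_less w z}" using word_less_iff_prefix by blast
  qed
  moreover have "w \<in> word_cyl (map w [0..<l])" by (rule word_in_cyl_prefix)
  ultimately show "\<exists>T. open T \<and> w \<in> T \<and> T \<subseteq> {w. word_less w z}"
    using open_word_cyl by blast
qed

section \<open>Factor complexity of a shift\<close>

locale shift_space =
  fixes k :: nat and L :: "word set"
  assumes L_alph_words: "L \<subseteq> alph_words k"
    and shift_image_subset: "shift ` L \<subseteq> L"
    and L_nonempty: "L \<noteq> {}"
begin

lemma shift_in_L: "w \<in> L \<Longrightarrow> shift w \<in> L"
  using shift_image_subset by auto

lemma funpow_shift_in_L: "w \<in> L \<Longrightarrow> (shift ^^ j) w \<in> L"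
  by (induction j) (auto intro: shift_in_L)

lemma letter_less: "w \<in> L \<Longrightarrow> w i < k"
  using L_alph_words unfolding alph_words_def by auto

lemma alphabet_nonempty: "k > 0"
  using L_nonempty letter_less by fastforce

lemma Fact_eq_prefixes: "Fact L n = (\<lambda>w. map w [0..<n]) ` L"
proof
  show "Fact L n \<subseteq> (\<lambda>w. map w [0..<n]) ` L"
    unfolding Fact_def using map_upt_funpow_shift funpow_shift_in_L by fastforce
  show "(\<lambda>w. map w [0..<n]) ` L \<subseteq> Fact L n"
    unfolding Fact_def by (force intro: exI[of _ 0])
qed

lemma prefix_in_Fact: "w \<in> L \<Longrightarrow> map w [0..<n] \<in> Fact L n"
  using Fact_eq_prefixes by auto

lemma FactE: "v \<in> Fact L n \<Longrightarrow> (\<And>w. w \<in> L \<Longrightarrow> v = map w [0..<n] \<Longrightarrow> P) \<Longrightarrow> P"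
  using Fact_eq_prefixes by auto

lemma length_Fact: "v \<in> Fact L n \<Longrightarrow> length v = n"
  by (erule FactE) auto

lemma set_Fact: "v \<in> Fact L n \<Longrightarrow> set v \<subseteq> {..<k}"
  by (erule FactE) (auto intro: letter_less)

lemma finite_Fact: "finite (Fact L n)"
proof -
  have "Fact L n \<subseteq> {xs. set xs \<subseteq> {..<k} \<and> length xs = n}" using length_Fact set_Fact by blast
  then show ?thesis using finite_lists_length_eq[of "{..<k}" n] finite_subset by auto
qed

lemma pL_pos: "pL L n > 0"
  unfolding pL_def using finite_Fact Fact_eq_prefixes L_nonempty by (simp add: card_gt_0_iff)

lemma take_Fact: "v \<in> Fact L n \<Longrightarrow> m \<le> n \<Longrightarrow> take m v \<in> Fact L m"
  by (erule FactE) (auto simp: take_map prefix_in_Fact min_def)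

lemma take_image_Fact: "m \<le> n \<Longrightarrow> take m ` Fact L n = Fact L m"
proof
  assume "m \<le> n"
  then show "take m ` Fact L n \<subseteq> Fact L m" using take_Fact by auto
  show "Fact L m \<subseteq> take m ` Fact L n"
  proof
    fix v assume "v \<in> Fact L m"
    then obtain w where "w \<in> L" "v = map w [0..<m]" by (rule FactE)
    then have "v = take m (map w [0..<n])" using \<open>m \<le> n\<close> by (simp add: take_map min_def)
    then show "v \<in> take m ` Fact L n" using prefix_in_Fact \<open>w \<in> L\<close> by auto
  qed
qed

lemma tl_Fact: "v \<in> Fact L n \<Longrightarrow> tl v \<in> Fact L (n - 1)"
proof (erule FactE)
  fix w assume "w \<in> L" "v = map w [0..<n]"
  then have "tl v = map (shift w) [0..<n-1]"
    by (cases n) (simp_all add: map_upt_Suc_shift del: upt_Suc)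
  then show ?thesis using prefix_in_Fact shift_in_L \<open>w \<in> L\<close> by auto
qed

lemma pL_mono: "m \<le> n \<Longrightarrow> pL L m \<le> pL L n"
  unfolding pL_def using take_image_Fact card_image_le finite_Fact by metis

lemma Fact_pref_subset: "Fact_pref L u n \<subseteq> Fact L n"
  unfolding Fact_pref_def by auto

lemma finite_Fact_pref: "finite (Fact_pref L u n)"
  using Fact_pref_subset finite_Fact finite_subset by metis

lemma pL_pref_le_pL: "pL_pref L u n \<le> pL L n"
  unfolding pL_pref_def pL_def using Fact_pref_subset finite_Fact card_mono by metis

lemma pL_pref_Nil: "pL_pref L [] n = pL L n"
  unfolding pL_pref_def pL_def Fact_pref_def by simp

lemma Fact_pref_non_factor: "u \<notin> Facts L \<Longrightarrow> Fact_pref L u m = {}"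
proof (rule ccontr)
  assume u: "u \<notin> Facts L" "Fact_pref L u m \<noteq> {}"
  then obtain v where v: "v \<in> Fact L m" "take (length u) v = u" unfolding Fact_pref_def by auto
  show False
  proof (cases "length u \<le> m")
    case True
    then have "u \<in> Fact L (length u)" using take_Fact[OF v(1) True] v(2) by simp
    then show False using u unfolding Facts_def by auto
  next
    case False
    then show False using v length_Fact[OF v(1)] by simp
  qed
qed

lemma disjoint_family_Fact_pref_snoc:
  "disjoint_family_on (\<lambda>a. Fact_pref L (u @ [a]) n) A"
  unfolding disjoint_family_on_def Fact_pref_def by auto

lemma card_UN_Fact_pref_snoc:
  "card (\<Union>a\<in>A. Fact_pref L (u @ [a]) n) = (\<Sum>a\<in>A. pL_pref L (u @ [a]) n)" if "finite A"
  unfolding pL_pref_def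
  by (rule card_UN_disjoint') (use that disjoint_family_Fact_pref_snoc finite_Fact_pref in auto)

lemma pL_pref_split_right:
  assumes "length u < n"
  shows "pL_pref L u n = (\<Sum>a<k. pL_pref L (u @ [a]) n)"
proof -
  have "Fact_pref L u n = (\<Union>a<k. Fact_pref L (u @ [a]) n)"
  proof (intro equalityI subsetI)
    fix v assume v: "v \<in> Fact_pref L u n"
    then have len: "length v = n" and vF: "v \<in> Fact L n" and tu: "take (length u) v = u"
      unfolding Fact_pref_def using length_Fact by auto
    have "v ! length u < k" using set_Fact[OF vF] len assms by (simp add: subset_iff)
    moreover have "take (length (u @ [v ! length u])) v = u @ [v ! length u]"
      using tu len assms by (simp add: take_Suc_conv_app_nth)
    ultimately show "v \<in> (\<Union>a<k. Fact_pref L (u @ [a]) n)" using vF unfolding Fact_pref_def by auto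
  next
    fix v assume "v \<in> (\<Union>a<k. Fact_pref L (u @ [a]) n)"
    then obtain a where v: "v \<in> Fact L n" "take (Suc (length u)) v = u @ [a]"
      unfolding Fact_pref_def by auto
    have "take (length u) v = take (length u) (take (Suc (length u)) v)" by simp
    also have "\<dots> = u" using v(2) by simp
    finally show "v \<in> Fact_pref L u n" using v(1) unfolding Fact_pref_def by simp
  qed
  then have "pL_pref L u n = card (\<Union>a<k. Fact_pref L (u @ [a]) n)" unfolding pL_pref_def by simp
  then show ?thesis using card_UN_Fact_pref_snoc by simp
qed

lemma pL_pref_Suc:
  assumes "length u \<le> m"
  shows "pL_pref L u m \<le> pL_pref L u (Suc m)"
    and "pL_pref L u (Suc m) + pL L m \<le> pL L (Suc m) + pL_pref L u m"
proof -
  have A: "{x \<in> Fact L (Suc m). take m x \<in> Fact_pref L u m} = Fact_pref L u (Suc m)"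
    unfolding Fact_pref_def using take_Fact[of _ "Suc m" m] assms
    by (auto simp: min_absorb1)
  note surj = finite_Fact take_image_Fact[of m "Suc m", simplified] Fact_pref_subset[of u m]
  show "pL_pref L u m \<le> pL_pref L u (Suc m)"
    using card_le_card_vimage[OF surj] A unfolding pL_pref_def by simp
  show "pL_pref L u (Suc m) + pL L m \<le> pL L (Suc m) + pL_pref L u m"
    using card_vimage_le[OF surj] A unfolding pL_pref_def pL_def by simp
qed

end

locale onto_shift_space = shift_space +
  assumes shift_image_eq: "shift ` L = L"
begin

lemma tl_image_Fact: "tl ` Fact L (Suc m) = Fact L m"
proof
  show "tl ` Fact L (Suc m) \<subseteq> Fact L m" using tl_Fact by fastforce
  show "Fact L m \<subseteq> tl ` Fact L (Suc m)"
  proof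
    fix v assume "v \<in> Fact L m"
    then obtain w where w: "w \<in> L" "v = map w [0..<m]" by (rule FactE)
    then obtain w' where w': "w' \<in> L" "w = shift w'" using shift_image_eq by auto
    have "tl (map w' [0..<Suc m]) = v" using w w' by (simp add: map_upt_Suc_shift del: upt_Suc)
    then show "v \<in> tl ` Fact L (Suc m)" using prefix_in_Fact[OF w'(1)] by (metis image_eqI)
  qed
qed

lemma pL_pref_Suc_left:
  assumes "length u \<le> m"
  shows "pL_pref L u m \<le> (\<Sum>a<k. pL_pref L (a # u) (Suc m))"
    and "(\<Sum>a<k. pL_pref L (a # u) (Suc m)) + pL L m \<le> pL L (Suc m) + pL_pref L u m"
proof -
  have A: "{x \<in> Fact L (Suc m). tl x \<in> Fact_pref L u m} = (\<Union>a<k. Fact_pref L (a # u) (Suc m))"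
  proof (intro equalityI subsetI)
    fix x assume x: "x \<in> {x \<in> Fact L (Suc m). tl x \<in> Fact_pref L u m}"
    then have xF: "x \<in> Fact L (Suc m)" and tu: "take (length u) (tl x) = u"
      unfolding Fact_pref_def by auto
    then obtain a x' where ax: "x = a # x'" using length_Fact[OF xF] by (cases x) auto
    then have "a < k" using set_Fact[OF xF] by auto
    then show "x \<in> (\<Union>a<k. Fact_pref L (a # u) (Suc m))"
      using xF ax tu unfolding Fact_pref_def by auto
  next
    fix x assume "x \<in> (\<Union>a<k. Fact_pref L (a # u) (Suc m))"
    then obtain a where xF: "x \<in> Fact L (Suc m)" and t: "take (Suc (length u)) x = a # u"
      unfolding Fact_pref_def by auto
    then show "x \<in> {x \<in> Fact L (Suc m). tl x \<in> Fact_pref L u m}"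
      using tl_Fact[OF xF] unfolding Fact_pref_def by (cases x) auto
  qed
  have cs: "card (\<Union>a<k. Fact_pref L (a # u) (Suc m)) = (\<Sum>a<k. pL_pref L (a # u) (Suc m))"
    unfolding pL_pref_def
    by (rule card_UN_disjoint') (auto simp: disjoint_family_on_def Fact_pref_def finite_Fact)
  note surj = finite_Fact tl_image_Fact Fact_pref_subset[of u m]
  show "pL_pref L u m \<le> (\<Sum>a<k. pL_pref L (a # u) (Suc m))"
    and "(\<Sum>a<k. pL_pref L (a # u) (Suc m)) + pL L m \<le> pL L (Suc m) + pL_pref L u m"
    using card_le_card_vimage[OF surj] card_vimage_le[OF surj] A cs
    by (simp_all add: pL_pref_def pL_def)
qed

end

section \<open>Minimal aperiodic shifts\<close>

lemma periodic_point_in_finite_orbit: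
  assumes "finite (range (\<lambda>j. (shift ^^ j) w))"
  shows "\<exists>a p. p > 0 \<and> (shift ^^ p) ((shift ^^ a) w) = (shift ^^ a) w"
proof -
  have "\<not> inj (\<lambda>j. (shift ^^ j) w)" using assms infinite_UNIV_nat finite_imageD by blast
  then obtain a b where "a < b" "(shift ^^ a) w = (shift ^^ b) w"
    unfolding inj_def by (metis linorder_neqE_nat)
  moreover have "(shift ^^ (b - a)) ((shift ^^ a) w) = (shift ^^ (b - a + a)) w"
    by (simp add: funpow_add)
  moreover have "b - a + a = b" using \<open>a < b\<close> by simp
  ultimately show ?thesis by (intro exI[of _ a] exI[of _ "b - a"]) simp
qed

lemma finite_orbit_of_periodic_point:
  assumes "(shift ^^ p) w = w" "p > 0"
  shows "finite {(shift ^^ j) w | j. True}"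
proof -
  have "(shift ^^ (q * p)) w = w" for q
    by (induction q) (simp_all add: funpow_add assms(1))
  then have "(shift ^^ j) w = (shift ^^ (j mod p)) w" for j
    by (metis (no_types, lifting) comp_apply funpow_add mod_div_mult_eq mult.commute)
  moreover have "j mod p < p" for j using assms(2) by simp
  ultimately have "{(shift ^^ j) w | j. True} \<subseteq> (\<lambda>j. (shift ^^ j) w) ` {..<p}"
    by blast
  then show ?thesis using finite_subset by blast
qed

locale minimal_aperiodic_shift = shift_space +
  assumes L_closed: "closed L"
    and minimal: "\<And>K. K \<subseteq> L \<Longrightarrow> K \<noteq> {} \<Longrightarrow> closed K \<Longrightarrow> shift ` K \<subseteq> K \<Longrightarrow> K = L"
    and aperiodic: "aperiodic_shift L"
begin

lemma no_finite_invariant_subset: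
  assumes "K \<subseteq> L" "K \<noteq> {}" "finite K" "shift ` K \<subseteq> K"
  shows False
proof -
  have "K = L" using minimal[OF assms(1,2) finite_imp_closed_words[OF assms(3)] assms(4)] .
  obtain w where w: "w \<in> L" using L_nonempty by auto
  have "range (\<lambda>j. (shift ^^ j) w) \<subseteq> L" using funpow_shift_in_L w by auto
  then obtain a p where p: "p > 0" "(shift ^^ p) ((shift ^^ a) w) = (shift ^^ a) w"
    using periodic_point_in_finite_orbit \<open>K = L\<close> assms(3) finite_subset by metis
  define w0 where "w0 = (shift ^^ a) w"
  let ?K = "{(shift ^^ j) w0 | j. True}"
  have "?K \<subseteq> L" using funpow_shift_in_L w w0_def by (auto simp: funpow_add[symmetric])
  moreover have "shift ` ?K \<subseteq> ?K"
  proof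
    fix z assume "z \<in> shift ` ?K"
    then obtain j where "z = (shift ^^ Suc j) w0" by auto
    then show "z \<in> ?K" by blast
  qed
  ultimately have "?K = L"
    using minimal finite_imp_closed_words finite_orbit_of_periodic_point p w0_def by blast
  moreover have "\<forall>i. w0 (i + p) = w0 i" using p(2) unfolding w0_def by (metis funpow_shift)
  ultimately show False using aperiodic p(1) unfolding aperiodic_shift_def by blast
qed

lemma infinite_L: "infinite L"
  using no_finite_invariant_subset[of L] L_nonempty shift_image_subset by auto

lemma compact_L: "compact L"
proof -
  have "compact (alph_words k \<inter> L)" using compact_alph_words L_closed by blast
  then show ?thesis using L_alph_words by (simp add: Int_absorb1)
qed

sublocale onto_shift_space
proof
  have "compact (shift ` L)"
    by (rule compact_continuous_image[OF continuous_on_subset[OF continuous_on_shift] compact_L]) auto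
  then show "shift ` L = L"
    by (intro minimal) (use shift_image_subset L_nonempty compact_imp_closed_words in auto)
qed

lemma prefixes_determine_words:
  assumes inj: "inj_on (take m) (Fact L (Suc m))"
  shows "w \<in> L \<Longrightarrow> w' \<in> L \<Longrightarrow> map w [0..<m] = map w' [0..<m] \<Longrightarrow> w j = w' j"
proof (induction j arbitrary: w w' rule: less_induct)
  case (less j)
  show ?case
  proof (cases "j < m")
    case True then show ?thesis using less.prems(3) map_eq_conv by fastforce
  next
    case False
    define z where "z = (shift ^^ (j - m)) w"
    define z' where "z' = (shift ^^ (j - m)) w'"
    have zL: "z \<in> L" "z' \<in> L" using less.prems funpow_shift_in_L z_def z'_def by auto
    have "map z [0..<m] = map z' [0..<m]"
    proof (rule map_cong[OF refl])
      fix i assume "i \<in> set [0..<m]"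
      then have "i + (j - m) < j" using False by simp
      then show "z i = z' i" using less unfolding z_def z'_def funpow_shift by blast
    qed
    then have "take m (map z [0..<Suc m]) = take m (map z' [0..<Suc m])" by (simp add: take_map)
    then have "map z [0..<Suc m] = map z' [0..<Suc m]"
      using inj prefix_in_Fact zL unfolding inj_on_def by blast
    then have "z m = z' m" by simp
    then show ?thesis using False unfolding z_def z'_def funpow_shift by simp
  qed
qed

text \<open>Otherwise every word of \<open>L\<close> would be determined by its prefix of length \<open>m\<close>, and \<open>L\<close>
  would be finite.\<close>

lemma pL_less_pL_Suc: "pL L m < pL L (Suc m)"
proof (rule ccontr)
  assume "\<not> pL L m < pL L (Suc m)"
  then have eq: "card (Fact L (Suc m)) = card (Fact L m)"
    using pL_mono[of m "Suc m"] unfolding pL_def by simp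
  have "inj_on (take m) (Fact L (Suc m))"
    by (rule eq_card_imp_inj_on[OF finite_Fact]) (use take_image_Fact[of m "Suc m"] eq in simp)
  then have "inj_on (\<lambda>w. map w [0..<m]) L"
    using prefixes_determine_words by (intro inj_onI) blast
  moreover have "(\<lambda>w. map w [0..<m]) ` L \<subseteq> Fact L m" using prefix_in_Fact by auto
  ultimately have "finite L" using finite_Fact finite_imageD finite_subset by metis
  then show False using infinite_L by simp
qed

lemma mem_L_if_prefixes_are_factors:
  assumes "\<And>l. map w [0..<l] \<in> Fact L l"
  shows "w \<in> L"
proof (rule ccontr)
  assume "w \<notin> L"
  then obtain l where l: "word_cyl (map w [0..<l]) \<subseteq> - L"
    using L_closed open_contains_word_cyl by blast
  obtain z where "z \<in> L" "map z [0..<l] = map w [0..<l]" using assms[of l] by (rule FactE) metis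
  then show False using l by (metis ComplD subsetD word_cyl_iff length_map length_upt minus_nat.diff_0)
qed

lemma Cyl_Nil: "Cyl L [] = L"
  unfolding Cyl_def by simp

lemma Cyl_Int_Cyl: "Cyl L u \<inter> Cyl L u' \<in> range (Cyl L)"
proof (cases "\<exists>i<min (length u) (length u'). u ! i \<noteq> u' ! i")
  case True
  then have "Cyl L u \<inter> Cyl L u' = Cyl L [k]" unfolding Cyl_def using letter_less by fastforce
  then show ?thesis by blast
next
  case False
  then have "Cyl L u \<inter> Cyl L u' = Cyl L (if length u \<le> length u' then u' else u)"
    unfolding Cyl_def by auto
  then show ?thesis by blast
qed

lemma disjoint_Cyl:
  assumes "length u = length u'" "u \<noteq> u'"
  shows "Cyl L u \<inter> Cyl L u' = {}"
proof -
  obtain i where "i < length u" "u ! i \<noteq> u' ! i" using assms nth_equalityI by blast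
  then show ?thesis using assms(1) unfolding Cyl_def by auto
qed

lemma vimage_shift_Cyl: "shift -` Cyl L u \<inter> L = (\<Union>a<k. Cyl L (a # u))"
proof (intro equalityI subsetI)
  fix w assume w: "w \<in> shift -` Cyl L u \<inter> L"
  then have "w \<in> Cyl L (w 0 # u)" unfolding Cyl_def shift_def
    by (auto simp: nth_Cons split: nat.split)
  then show "w \<in> (\<Union>a<k. Cyl L (a # u))" using w letter_less by blast
next
  fix w assume "w \<in> (\<Union>a<k. Cyl L (a # u))"
  then show "w \<in> shift -` Cyl L u \<inter> L" unfolding Cyl_def using shift_in_L
    by (auto simp: shift_def)
qed

lemma sets_restrict_borel_L: "sets (restrict_space borel L) = sigma_sets L (range (Cyl L))"
proof -
  have L: "L \<in> sigma_sets UNIV (range word_cyl)"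
    using L_closed sets_borel_words by (metis borel_closed)
  have "sets (restrict_space borel L) = (\<inter>) L ` sigma_sets UNIV (range word_cyl)"
    unfolding sets_restrict_space sets_borel_words by simp
  also have "\<dots> = sigma_sets L ((\<inter>) L ` range word_cyl)"
    by (rule sigma_sets_Int[OF L]) simp
  also have "(\<inter>) L ` range word_cyl = range (Cyl L)" by (auto simp: Cyl_eq_word_cyl)
  finally show ?thesis .
qed

lemma measurable_shift: "shift \<in> restrict_space borel L \<rightarrow>\<^sub>M restrict_space borel L"
proof (rule measurable_restrict_space2)
  show "shift \<in> space (restrict_space borel L) \<rightarrow> L"
    using shift_in_L by (auto simp: space_restrict_space)
  show "shift \<in> restrict_space borel L \<rightarrow>\<^sub>M borel"
    by (rule measurable_restrict_space1) (rule borel_measurable_continuous_onI[OF continuous_on_shift])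
qed

lemma sets_restrict_borel_L_iff: "S \<in> sets (restrict_space borel L) \<longleftrightarrow> S \<subseteq> L \<and> S \<in> sets borel"
  using borel_closed[OF L_closed] by (subst sets_restrict_space_iff) auto

end

section \<open>Measures from consistent cylinder weights\<close>

text \<open>\<open>M u\<close> is the prospective measure of the cylinder of \<open>u\<close>; additivity under left extension
  is shift invariance.\<close>

locale cylinder_weights = minimal_aperiodic_shift +
  fixes M :: "nat list \<Rightarrow> real"
  assumes M_nonneg: "M u \<ge> 0"
    and M_Nil: "M [] = 1"
    and M_eq_sum_snoc: "M u = (\<Sum>a<k. M (u @ [a]))"
    and M_eq_sum_Cons: "M u = (\<Sum>a<k. M (a # u))"
    and M_non_factor: "u \<notin> Facts L \<Longrightarrow> M u = 0"
begin

definition offset :: "nat list \<Rightarrow> real" where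
  "offset u = (\<Sum>i<length u. \<Sum>b<u ! i. M (take i u @ [b]))"

definition cyl_interval :: "nat list \<Rightarrow> real set" where
  "cyl_interval u = {offset u..<offset u + M u}"

lemma mem_cyl_interval_iff: "x \<in> cyl_interval u \<longleftrightarrow> offset u \<le> x \<and> x < offset u + M u"
  unfolding cyl_interval_def by simp

lemma offset_Nil [simp]: "offset [] = 0"
  unfolding offset_def by simp

lemma offset_snoc: "offset (u @ [a]) = offset u + (\<Sum>b<a. M (u @ [b]))"
proof -
  have "offset (u @ [a]) = (\<Sum>i<length u. \<Sum>b<(u @ [a]) ! i. M (take i (u @ [a]) @ [b]))
      + (\<Sum>b<a. M (u @ [b]))"
    unfolding offset_def by simp
  also have "(\<Sum>i<length u. \<Sum>b<(u @ [a]) ! i. M (take i (u @ [a]) @ [b])) = offset u"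
    unfolding offset_def by (intro sum.cong) (auto simp: nth_append)
  finally show ?thesis .
qed

lemma offset_nonneg: "offset u \<ge> 0"
  unfolding offset_def by (intro sum_nonneg) (simp add: M_nonneg)

lemma sum_M_snoc_le: "(\<Sum>b<c. M (u @ [b])) \<le> M u"
proof (cases "c \<le> k")
  case True
  have "(\<Sum>b<c. M (u @ [b])) \<le> (\<Sum>b<k. M (u @ [b]))"
    by (rule sum_mono2) (use True M_nonneg in auto)
  then show ?thesis using M_eq_sum_snoc[of u] by simp
next
  case False
  have "(\<Sum>b<c. M (u @ [b])) = (\<Sum>b<k. M (u @ [b])) + (\<Sum>b\<in>{k..<c}. M (u @ [b]))"
    using False by (metis linorder_le_cases sum.atLeastLessThan_concat lessThan_atLeast0 zero_le)
  also have "(\<Sum>b\<in>{k..<c}. M (u @ [b])) = 0"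
  proof (intro sum.neutral ballI M_non_factor notI)
    fix b assume "b \<in> {k..<c}" "u @ [b] \<in> Facts L"
    then show False using set_Fact unfolding Facts_def by fastforce
  qed
  finally show ?thesis using M_eq_sum_snoc[of u] by simp
qed

lemma M_Cons_le: "a < k \<Longrightarrow> M (a # v) \<le> M v"
  using member_le_sum[of a "{..<k}" "\<lambda>b. M (b # v)"] M_nonneg M_eq_sum_Cons[of v] by simp

lemma M_take_ge: "M u \<le> M (take j u)"
proof (induction u rule: rev_induct)
  case (snoc a u)
  have "M (u @ [a]) \<le> M u"
    using sum_M_snoc_le[where c = "Suc a" and u = u] sum_nonneg[of "{..<a}" "\<lambda>b. M (u @ [b])"] M_nonneg by simp
  then show ?case using snoc by (cases "j \<le> length u") auto
qed simp

lemma offset_take_le: "offset (take j u) \<le> offset u"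
proof (cases "j \<le> length u")
  case True
  have "offset (take j u) = (\<Sum>i<j. \<Sum>b<u ! i. M (take i u @ [b]))"
    unfolding offset_def using True by (intro sum.cong) (auto simp: min_def)
  also have "\<dots> \<le> offset u" unfolding offset_def
    by (rule sum_mono2) (use True in \<open>auto intro!: sum_nonneg simp: M_nonneg\<close>)
  finally show ?thesis .
qed simp

lemma cyl_end_take_le: "offset u + M u \<le> offset (take j u) + M (take j u)"
proof (induction u rule: rev_induct)
  case (snoc a u)
  have "offset (u @ [a]) + M (u @ [a]) \<le> offset u + M u"
    using offset_snoc[of u a] sum_M_snoc_le[where c = "Suc a" and u = u] by simp
  then show ?case using snoc by (cases "j \<le> length u") auto
qed simp

lemma cyl_end_le_1: "offset u + M u \<le> 1"
  using cyl_end_take_le[of u 0] M_Nil by simp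

lemma cyl_interval_subset: "cyl_interval u \<subseteq> {0..<1}"
  unfolding cyl_interval_def using offset_nonneg[of u] cyl_end_le_1[of u] by auto

lemma cyl_end_le_offset:
  assumes "length u = length u'" "list_lex_less u u'"
  shows "offset u + M u \<le> offset u'"
proof -
  obtain i where i: "i < length u" "take i u = take i u'" "u ! i < u' ! i"
    using assms unfolding list_lex_less_def by auto
  define c where "c = take i u"
  have tu: "take (Suc i) u = c @ [u ! i]" using i c_def by (simp add: take_Suc_conv_app_nth)
  have tu': "take (Suc i) u' = c @ [u' ! i]"
    using i c_def assms(1) by (simp add: take_Suc_conv_app_nth)
  have "offset u + M u \<le> offset (c @ [u ! i]) + M (c @ [u ! i])"
    using cyl_end_take_le[of u "Suc i"] tu by simp
  also have "\<dots> = offset c + (\<Sum>b<Suc (u ! i). M (c @ [b]))" using offset_snoc by simp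
  also have "\<dots> \<le> offset c + (\<Sum>b<u' ! i. M (c @ [b]))"
    using sum_mono2[of "{..<u' ! i}" "{..<Suc (u ! i)}" "\<lambda>b. M (c @ [b])"] i(3) M_nonneg by simp
  also have "\<dots> = offset (take (Suc i) u')" using tu' offset_snoc by simp
  also have "\<dots> \<le> offset u'" by (rule offset_take_le)
  finally show ?thesis .
qed

lemma cyl_interval_unique:
  assumes "length u = length u'" "x \<in> cyl_interval u" "x \<in> cyl_interval u'"
  shows "u = u'"
proof (rule ccontr)
  assume "u \<noteq> u'"
  then have "list_lex_less u u' \<or> list_lex_less u' u" using list_lex_less_total assms(1) by blast
  then show False
    using cyl_end_le_offset[of u u'] cyl_end_le_offset[of u' u] assms unfolding cyl_interval_def
    by auto
qed

text \<open>The coding map: \<open>code_prefix x l\<close> is the unique word of length \<open>l\<close> whose cylinder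
  interval contains \<open>x\<close>, found letter by letter.\<close>

fun code_prefix :: "real \<Rightarrow> nat \<Rightarrow> nat list" where
  "code_prefix x 0 = []"
| "code_prefix x (Suc l) =
     code_prefix x l @ [LEAST a. x < offset (code_prefix x l @ [a]) + M (code_prefix x l @ [a])]"

definition code :: "real \<Rightarrow> word" where
  "code x = (\<lambda>i. code_prefix x (Suc i) ! i)"

lemma length_code_prefix [simp]: "length (code_prefix x l) = l"
  by (induction l) auto

lemma code_prefix_in_cyl_interval:
  assumes "0 \<le> x" "x < 1"
  shows "x \<in> cyl_interval (code_prefix x l)"
proof (induction l)
  case 0 then show ?case using assms M_Nil unfolding cyl_interval_def by simp
next
  case (Suc l)
  define u where "u = code_prefix x l"
  define P where "P = (\<lambda>a. x < offset (u @ [a]) + M (u @ [a]))"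
  define a where "a = (LEAST a. P a)"
  have IH: "x \<in> cyl_interval u" using Suc u_def by simp
  have "offset (u @ [k - 1]) + M (u @ [k - 1]) = offset u + (\<Sum>b<Suc (k - 1). M (u @ [b]))"
    using offset_snoc by simp
  also have "Suc (k - 1) = k" using alphabet_nonempty by simp
  finally have "P (k - 1)" using IH M_eq_sum_snoc[of u] unfolding P_def cyl_interval_def by simp
  then have Pa: "P a" using LeastI[of P] a_def by simp
  have "offset (u @ [a]) \<le> x"
  proof (cases a)
    case 0 then show ?thesis using IH offset_snoc[of u 0] unfolding cyl_interval_def by simp
  next
    case (Suc a')
    have "\<not> P a'" using not_less_Least[of a' P] Suc a_def by simp
    moreover have "offset (u @ [a]) = offset (u @ [a']) + M (u @ [a'])" using Suc offset_snoc by simp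
    ultimately show ?thesis unfolding P_def by simp
  qed
  moreover have "code_prefix x (Suc l) = u @ [a]" unfolding a_def P_def u_def by simp
  ultimately show ?case using Pa unfolding cyl_interval_def P_def by (simp only:) simp
qed

lemma take_code_prefix: "m \<le> l \<Longrightarrow> take m (code_prefix x l) = code_prefix x m"
proof (induction l)
  case (Suc l)
  then show ?case by (cases "m = Suc l") (simp_all add: le_Suc_eq)
qed simp

lemma prefix_code: "map (code x) [0..<l] = code_prefix x l"
proof (rule nth_equalityI)
  fix i assume "i < length (map (code x) [0..<l])"
  then have i: "i < l" by simp
  have "code_prefix x (Suc i) = take (Suc i) (code_prefix x l)" using take_code_prefix[of "Suc i" l x] i by simp
  then show "map (code x) [0..<l] ! i = code_prefix x l ! i" using i unfolding code_def by simp
qed simp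

lemma prefix_code_in_cyl_interval: "0 \<le> x \<Longrightarrow> x < 1 \<Longrightarrow> x \<in> cyl_interval (map (code x) [0..<l])"
  using code_prefix_in_cyl_interval prefix_code by simp

lemma prefix_code_eq_iff:
  "0 \<le> x \<Longrightarrow> x < 1 \<Longrightarrow> map (code x) [0..<length u] = u \<longleftrightarrow> x \<in> cyl_interval u"
  using prefix_code_in_cyl_interval cyl_interval_unique[of u] by (metis length_map length_upt minus_nat.diff_0)

lemma code_in_L:
  assumes "0 \<le> x" "x < 1"
  shows "code x \<in> L"
proof (rule mem_L_if_prefixes_are_factors)
  fix l
  have "M (map (code x) [0..<l]) > 0"
    using prefix_code_in_cyl_interval[OF assms, of l] unfolding cyl_interval_def by simp
  then have "map (code x) [0..<l] \<in> Facts L" using M_non_factor by force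
  then show "map (code x) [0..<l] \<in> Fact L l" unfolding Facts_def using length_Fact by fastforce
qed

lemma vimage_code_Cyl: "code -` Cyl L u \<inter> {0..<1} = cyl_interval u"
proof -
  have "code -` Cyl L u \<inter> {0..<1} = {x \<in> {0..<1}. x \<in> cyl_interval u}"
    using code_in_L prefix_code_eq_iff by (auto simp: Cyl_eq_word_cyl word_cyl_iff)
  then show ?thesis using cyl_interval_subset[of u] by auto
qed

definition lebesgue_01 :: "real measure" where
  "lebesgue_01 = restrict_space lborel {0..<1}"

lemma space_lebesgue_01: "space lebesgue_01 = {0..<1}"
  unfolding lebesgue_01_def by (simp add: space_restrict_space)

lemma prob_space_lebesgue_01: "prob_space lebesgue_01"
proof
  have "emeasure lebesgue_01 (space lebesgue_01) = emeasure lborel {0..<1::real}"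
    unfolding lebesgue_01_def by (subst emeasure_restrict_space) (auto simp: space_restrict_space)
  then show "emeasure lebesgue_01 (space lebesgue_01) = 1" by simp
qed

lemma measurable_code: "code \<in> lebesgue_01 \<rightarrow>\<^sub>M restrict_space borel L"
proof (rule measurable_sigma_sets[OF sets_restrict_borel_L])
  show "range (Cyl L) \<subseteq> Pow L" unfolding Cyl_def by auto
  show "code \<in> space lebesgue_01 \<rightarrow> L" using code_in_L space_lebesgue_01 by auto
  fix y assume "y \<in> range (Cyl L)"
  then have "code -` y \<inter> space lebesgue_01 \<in> range cyl_interval"
    using vimage_code_Cyl space_lebesgue_01 by auto
  then show "code -` y \<inter> space lebesgue_01 \<in> sets lebesgue_01"
    using cyl_interval_subset unfolding lebesgue_01_def cyl_interval_def
    by (subst sets_restrict_space_iff) auto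
qed

definition mu :: "word measure" where
  "mu = distr lebesgue_01 (restrict_space borel L) code"

lemma prob_space_mu: "prob_space mu"
  unfolding mu_def by (rule prob_space.prob_space_distr[OF prob_space_lebesgue_01 measurable_code])

lemma sets_mu: "sets mu = sets (restrict_space borel L)"
  unfolding mu_def by simp

lemma space_mu: "space mu = L"
  unfolding mu_def by (simp add: space_restrict_space)

lemma borel_prob_on_mu: "borel_prob_on L mu"
  unfolding borel_prob_on_def using prob_space_mu sets_mu by simp

lemma measure_mu: "B \<in> sets mu \<Longrightarrow> measure mu B = measure lborel (code -` B \<inter> {0..<1})"
proof -
  assume "B \<in> sets mu"
  then have "measure mu B = measure lebesgue_01 (code -` B \<inter> space lebesgue_01)"
    unfolding mu_def using sets_mu by (intro measure_distr[OF measurable_code]) simp_all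
  then show ?thesis unfolding space_lebesgue_01 lebesgue_01_def
    by (simp add: measure_restrict_space)
qed

lemma Cyl_in_sets_mu: "Cyl L u \<in> sets mu"
  using sets_mu sets_restrict_borel_L by auto

lemma measure_mu_Cyl: "measure mu (Cyl L u) = M u"
  using measure_mu[OF Cyl_in_sets_mu] vimage_code_Cyl M_nonneg[of u]
  unfolding cyl_interval_def by (simp add: measure_def)

lemma measure_vimage_shift_Cyl: "measure mu (shift -` Cyl L u \<inter> L) = measure mu (Cyl L u)"
proof -
  interpret prob_space mu by (rule prob_space_mu)
  have "measure mu (shift -` Cyl L u \<inter> L) = measure mu (\<Union>a<k. Cyl L (a # u))"
    using vimage_shift_Cyl by simp
  also have "\<dots> = (\<Sum>a<k. measure mu (Cyl L (a # u)))"
  proof (rule measure_finite_Union)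
    show "disjoint_family_on (\<lambda>a. Cyl L (a # u)) {..<k}"
      unfolding disjoint_family_on_def using disjoint_Cyl by simp
    show "(\<lambda>a. Cyl L (a # u)) ` {..<k} \<subseteq> sets mu" using Cyl_in_sets_mu by blast
  qed (auto simp: emeasure_eq_measure)
  also have "\<dots> = M u" using M_eq_sum_Cons[of u] measure_mu_Cyl by simp
  finally show ?thesis using measure_mu_Cyl by simp
qed

lemma sets_mu_Cyl: "sets mu = sigma_sets L (range (Cyl L))"
  using sets_mu sets_restrict_borel_L by simp

lemma measurable_shift_mu: "shift \<in> mu \<rightarrow>\<^sub>M restrict_space borel L"
  using measurable_shift measurable_cong_sets[OF sets_mu refl] by blast

lemma distr_shift_mu: "distr mu (restrict_space borel L) shift = mu"
proof -
  interpret P: prob_space mu by (rule prob_space_mu)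
  let ?nu = "distr mu (restrict_space borel L) shift"
  interpret Q: prob_space ?nu by (rule P.prob_space_distr[OF measurable_shift_mu])
  show ?thesis
  proof (rule measure_eqI_generator_eq[where E = "range (Cyl L)" and \<Omega> = L and A = "\<lambda>_. L"])
    show "Int_stable (range (Cyl L))" unfolding Int_stable_def using Cyl_Int_Cyl by blast
    show "range (Cyl L) \<subseteq> Pow L" unfolding Cyl_def by auto
    show "sets ?nu = sigma_sets L (range (Cyl L))" using sets_restrict_borel_L by simp
    show "sets mu = sigma_sets L (range (Cyl L))" by (rule sets_mu_Cyl)
    show "range (\<lambda>_. L) \<subseteq> range (Cyl L)" by (metis Cyl_Nil image_subsetI rangeI)
    show "(\<Union>i::nat. L) = L" by simp
    fix X assume "X \<in> range (Cyl L)"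
    then obtain u where X: "X = Cyl L u" by auto
    have "measure ?nu X = measure mu (shift -` X \<inter> space mu)"
      by (rule measure_distr[OF measurable_shift_mu]) (use X Cyl_in_sets_mu sets_mu in simp)
    also have "\<dots> = measure mu X" using X measure_vimage_shift_Cyl space_mu by simp
    finally show "emeasure ?nu X = emeasure mu X"
      by (simp add: P.emeasure_eq_measure Q.emeasure_eq_measure)
  qed (simp add: Q.emeasure_eq_measure)
qed

lemma shift_invariant_mu: "shift_invariant L mu"
  unfolding shift_invariant_def
proof
  fix B assume B: "B \<in> sets mu"
  have "measure mu (shift -` B \<inter> L) = measure (distr mu (restrict_space borel L) shift) B"
    using measure_distr[OF measurable_shift_mu, of B] B sets_mu space_mu by simp
  then show "measure mu (shift -` B \<inter> L) = measure mu B" using distr_shift_mu by simp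
qed

lemma sum_M_le_1:
  assumes "finite U" "\<forall>u \<in> U. length u = l"
  shows "(\<Sum>u\<in>U. M u) \<le> 1"
proof -
  interpret prob_space mu by (rule prob_space_mu)
  have "(\<Sum>u\<in>U. M u) = (\<Sum>u\<in>U. measure mu (Cyl L u))" using measure_mu_Cyl by simp
  also have "\<dots> = measure mu (\<Union>u\<in>U. Cyl L u)"
  proof (rule measure_finite_Union[symmetric])
    show "(\<lambda>u. Cyl L u) ` U \<subseteq> sets mu" using Cyl_in_sets_mu by blast
    show "disjoint_family_on (Cyl L) U"
      unfolding disjoint_family_on_def using assms(2) disjoint_Cyl by simp
  qed (simp_all add: assms(1) emeasure_eq_measure)
  also have "\<dots> \<le> 1" by simp
  finally show ?thesis .
qed

definition inf_prefix_weight :: "word \<Rightarrow> real" where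
  "inf_prefix_weight w = (INF l. M (map w [0..<l]))"

lemma bdd_below_prefix_weights: "bdd_below (range (\<lambda>l. M (map w [0..<l])))"
  by (rule bdd_belowI[of _ 0]) (auto simp: M_nonneg)

lemma inf_prefix_weight_le: "inf_prefix_weight w \<le> M (map w [0..<l])"
  unfolding inf_prefix_weight_def by (rule cINF_lower[OF bdd_below_prefix_weights]) simp

lemma inf_prefix_weight_greatest: "(\<And>l. c \<le> M (map w [0..<l])) \<Longrightarrow> c \<le> inf_prefix_weight w"
  unfolding inf_prefix_weight_def by (rule cINF_greatest) auto

lemma inf_prefix_weight_shift: "w \<in> L \<Longrightarrow> inf_prefix_weight w \<le> inf_prefix_weight (shift w)"
proof (rule inf_prefix_weight_greatest)
  fix l assume "w \<in> L"
  have "inf_prefix_weight w \<le> M (map w [0..<Suc l])" by (rule inf_prefix_weight_le)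
  also have "\<dots> \<le> M (map (shift w) [0..<l])" unfolding map_upt_Suc_shift
    by (rule M_Cons_le[OF letter_less[OF \<open>w \<in> L\<close>]])
  finally show "inf_prefix_weight w \<le> M (map (shift w) [0..<l])" .
qed

text \<open>At most \<open>1/e\<close> words can have all their prefixes of weight \<open>\<ge> e\<close>: long enough prefixes
  separate them, and distinct words of equal length have total weight \<open>\<le> 1\<close>.\<close>

lemma finite_heavy_words:
  assumes e: "e > 0"
  shows "finite {w \<in> L. e \<le> inf_prefix_weight w}"
proof (rule ccontr)
  assume "infinite {w \<in> L. e \<le> inf_prefix_weight w}"
  define N where "N = Suc (nat \<lceil>1 / e\<rceil>)"
  obtain F where F: "F \<subseteq> {w \<in> L. e \<le> inf_prefix_weight w}" "finite F" "card F = N"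
    using infinite_arbitrarily_large \<open>infinite _\<close> by blast
  obtain l where inj: "inj_on (\<lambda>w. map w [0..<l]) F" using inj_on_prefixes[OF F(2)] by blast
  have "real N * e = (\<Sum>w\<in>F. e)" using F(3) by simp
  also have "\<dots> \<le> (\<Sum>w\<in>F. M (map w [0..<l]))"
    using F(1) inf_prefix_weight_le order_trans by (intro sum_mono) blast
  also have "\<dots> = (\<Sum>u\<in>(\<lambda>w. map w [0..<l]) ` F. M u)"
    by (rule sum.reindex[OF inj, symmetric, unfolded comp_def])
  also have "\<dots> \<le> 1" by (rule sum_M_le_1[where l = l]) (use F(2) in auto)
  finally have "real N * e \<le> 1" .
  moreover have "real N > 1 / e" unfolding N_def by linarith
  ultimately show False using e by (simp add: field_simps)
qed

text \<open>The words on which \<open>inf_prefix_weight\<close> attains a positive maximum would form a finite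
  shift-invariant subset of \<open>L\<close>.\<close>

lemma inf_prefix_weight_eq_0: "w \<in> L \<Longrightarrow> inf_prefix_weight w = 0"
proof (rule ccontr)
  assume w: "w \<in> L" "inf_prefix_weight w \<noteq> 0"
  define e where "e = inf_prefix_weight w"
  have e: "e > 0"
    using w inf_prefix_weight_greatest[of 0 w] M_nonneg e_def by (simp add: order_le_neq_trans)
  define S where "S = {w \<in> L. e \<le> inf_prefix_weight w}"
  have fS: "finite S" unfolding S_def by (rule finite_heavy_words[OF e])
  have wS: "w \<in> S" unfolding S_def e_def using w by simp
  define m where "m = Max (inf_prefix_weight ` S)"
  have mS: "m \<in> inf_prefix_weight ` S" unfolding m_def using fS wS by (intro Max_in) auto
  have mge: "\<And>z. z \<in> S \<Longrightarrow> inf_prefix_weight z \<le> m" unfolding m_def using fS by simp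
  have em: "e \<le> m" using mge[OF wS] e_def by simp
  define A where "A = {z \<in> L. inf_prefix_weight z = m}"
  show False
  proof (rule no_finite_invariant_subset[of A])
    show "A \<subseteq> L" unfolding A_def by auto
    show "A \<noteq> {}" using mS unfolding A_def S_def by auto
    show "finite A" using fS em finite_subset[of A S] unfolding A_def S_def by auto
    show "shift ` A \<subseteq> A"
    proof
      fix y assume "y \<in> shift ` A"
      then obtain z where z: "z \<in> A" "y = shift z" by auto
      then have "z \<in> L" "y \<in> L" using A_def shift_in_L by auto
      then have "m \<le> inf_prefix_weight y" using inf_prefix_weight_shift z A_def by fastforce
      moreover have "y \<in> S" unfolding S_def using em \<open>y \<in> L\<close> calculation by simp
      ultimately show "y \<in> A" unfolding A_def using mge \<open>y \<in> L\<close> by force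
    qed
  qed
qed

lemma eventually_prefix_weight_less:
  assumes "w \<in> L" "e > 0"
  shows "\<exists>l0. \<forall>l\<ge>l0. M (map w [0..<l]) < e"
proof -
  have "inf_prefix_weight w < e" using inf_prefix_weight_eq_0[OF assms(1)] assms(2) by simp
  then obtain l0 where l0: "M (map w [0..<l0]) < e"
    unfolding inf_prefix_weight_def
    using cINF_less_iff[OF UNIV_not_empty bdd_below_prefix_weights] by blast
  have "M (map w [0..<l]) \<le> M (map w [0..<l0])" if "l \<ge> l0" for l
    using that M_take_ge[of "map w [0..<l]" l0] by (simp add: take_map min_def)
  then show ?thesis using l0 by force
qed

lemma prefix_weight_tendsto_0: "w \<in> L \<Longrightarrow> (\<lambda>l. M (map w [0..<l])) \<longlonglongrightarrow> 0"
proof (rule LIMSEQ_I)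
  fix r :: real assume "w \<in> L" "0 < r"
  then obtain l0 where "\<forall>l\<ge>l0. M (map w [0..<l]) < r"
    using eventually_prefix_weight_less by blast
  then show "\<exists>no. \<forall>l\<ge>no. norm (M (map w [0..<l]) - 0) < r" using M_nonneg by auto
qed

lemma nonatomic_mu: "nonatomic L mu"
  unfolding nonatomic_def
proof
  fix w assume w: "w \<in> L"
  interpret prob_space mu by (rule prob_space_mu)
  have le: "measure mu {w} \<le> M (map w [0..<l])" for l
  proof -
    have "{w} \<subseteq> Cyl L (map w [0..<l])" using w unfolding Cyl_def by auto
    then have "measure mu {w} \<le> measure mu (Cyl L (map w [0..<l]))"
      using finite_measure_mono Cyl_in_sets_mu by blast
    then show ?thesis using measure_mu_Cyl by simp
  qed
  have "measure mu {w} \<le> 0"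
    by (rule LIMSEQ_le_const[OF prefix_weight_tendsto_0[OF w]]) (use le in auto)
  then show "measure mu {w} = 0" by (simp add: antisym)
qed

lemma closed_positive_prefix_words: "closed {w. \<forall>l. M (map w [0..<l]) > 0}"
proof -
  have "- {w. \<forall>l. M (map w [0..<l]) > 0} = \<Union> {word_cyl u | u. M u = 0}"
  proof (intro equalityI subsetI)
    fix w assume "w \<in> - {w. \<forall>l. M (map w [0..<l]) > 0}"
    then obtain l where "M (map w [0..<l]) = 0" using M_nonneg by (force simp: order_le_less)
    then show "w \<in> \<Union> {word_cyl u | u. M u = 0}" using word_in_cyl_prefix by blast
  next
    fix w assume "w \<in> \<Union> {word_cyl u | u. M u = 0}"
    then obtain u where "M u = 0" "map w [0..<length u] = u" by (auto simp: word_cyl_iff)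
    then have "\<not> M (map w [0..<length u]) > 0" by simp
    then show "w \<in> - {w. \<forall>l. M (map w [0..<l]) > 0}" by auto
  qed
  moreover have "open (\<Union> {word_cyl u | u. M u = 0})" using open_word_cyl by auto
  ultimately show ?thesis by (simp add: closed_def)
qed

text \<open>By minimality, since the words all of whose prefixes have positive weight form a closed
  invariant subset of \<open>L\<close> containing \<open>code 0\<close>.\<close>

lemma prefix_weight_pos: "w \<in> L \<Longrightarrow> M (map w [0..<l]) > 0"
proof -
  define K where "K = L \<inter> {w. \<forall>l. M (map w [0..<l]) > 0}"
  have "M (map (code 0) [0..<l]) > 0" for l
    using prefix_code_in_cyl_interval[of 0 l] offset_nonneg[of "map (code 0) [0..<l]"]
    unfolding mem_cyl_interval_iff by simp
  then have "code 0 \<in> K" using code_in_L[of 0] unfolding K_def by simp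
  moreover have "shift ` K \<subseteq> K"
  proof
    fix y assume "y \<in> shift ` K"
    then obtain w where w: "w \<in> K" "y = shift w" by auto
    have "M (map y [0..<l]) > 0" for l
    proof -
      have "0 < M (map w [0..<Suc l])" using w(1) unfolding K_def by blast
      also have "\<dots> \<le> M (map y [0..<l])" unfolding map_upt_Suc_shift w(2)
        using M_Cons_le letter_less w(1) K_def by simp
      finally show ?thesis .
    qed
    then show "y \<in> K" unfolding K_def using shift_in_L w K_def by simp
  qed
  moreover have "closed K"
    unfolding K_def using closed_positive_prefix_words L_closed by (rule closed_Int[rotated])
  ultimately have "K = L" using minimal[of K] unfolding K_def by blast
  then show "w \<in> L \<Longrightarrow> M (map w [0..<l]) > 0" unfolding K_def by auto
qed

lemma code_0_least: "z \<in> L \<Longrightarrow> word_le (code 0) z"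
proof (rule ccontr)
  assume z: "z \<in> L" "\<not> word_le (code 0) z"
  then have "word_less z (code 0)" using word_less_total unfolding word_le_def by blast
  then obtain l where "list_lex_less (map z [0..<l]) (map (code 0) [0..<l])"
    using word_less_iff_prefix by blast
  then have "offset (map z [0..<l]) + M (map z [0..<l]) \<le> offset (map (code 0) [0..<l])"
    by (intro cyl_end_le_offset) auto
  moreover have "offset (map (code 0) [0..<l]) \<le> 0"
    using prefix_code_in_cyl_interval[of 0 l] unfolding mem_cyl_interval_iff by simp
  ultimately show False using prefix_weight_pos[OF z(1), of l] offset_nonneg[of "map z [0..<l]"] by simp
qed

lemma word_min_L: "word_min L = code 0"
  unfolding word_min_def
proof (rule the_equality)
  show "code 0 \<in> L \<and> (\<forall>w'\<in>L. word_le (code 0) w')" using code_in_L[of 0] code_0_least by simp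
  fix w assume w: "w \<in> L \<and> (\<forall>w'\<in>L. word_le w w')"
  then have "word_le w (code 0)" "word_le (code 0) w" using code_in_L[of 0] code_0_least by auto
  then show "w = code 0" unfolding word_le_def using word_less_asym by blast
qed

text \<open>\<open>position z\<close> is the point of \<open>[0,1]\<close> coded by \<open>z\<close>; it turns out to be \<open>\<phi>\<^sub>\<mu> z\<close>.\<close>

definition position :: "word \<Rightarrow> real" where
  "position z = (SUP l. offset (map z [0..<l]))"

lemma offset_prefix_le_cyl_end:
  "offset (map z [0..<l']) \<le> offset (map z [0..<l]) + M (map z [0..<l])"
proof -
  have "offset (map z [0..<l']) \<le> offset (map z [0..<max l l'])"
    using offset_take_le[of l' "map z [0..<max l l']"] by (simp add: take_map min_def)
  also have "\<dots> \<le> offset (map z [0..<max l l']) + M (map z [0..<max l l'])" using M_nonneg by simp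
  also have "\<dots> \<le> offset (map z [0..<l]) + M (map z [0..<l])"
    using cyl_end_take_le[of "map z [0..<max l l']" l] by (simp add: take_map min_def)
  finally show ?thesis .
qed

lemma bdd_above_prefix_offsets: "bdd_above (range (\<lambda>l. offset (map z [0..<l])))"
  using offset_prefix_le_cyl_end[of z _ 0] M_Nil by (intro bdd_aboveI[of _ 1]) auto

lemma offset_prefix_le_position: "offset (map z [0..<l]) \<le> position z"
  unfolding position_def by (rule cSUP_upper[OF _ bdd_above_prefix_offsets]) simp

lemma position_le_cyl_end: "position z \<le> offset (map z [0..<l]) + M (map z [0..<l])"
  unfolding position_def by (rule cSUP_least) (auto intro: offset_prefix_le_cyl_end)

lemma position_bounds: "0 \<le> position z" "position z \<le> 1"
  using offset_prefix_le_position[of z 0] position_le_cyl_end[of z 0] M_Nil by auto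

lemma position_code: "0 \<le> x \<Longrightarrow> x < 1 \<Longrightarrow> position (code x) = x"
proof -
  assume x: "0 \<le> x" "x < 1"
  have "\<bar>position (code x) - x\<bar> \<le> M (map (code x) [0..<l])" for l
    using offset_prefix_le_position[of "code x" l] position_le_cyl_end[of "code x" l]
      prefix_code_in_cyl_interval[OF x, of l]
    unfolding mem_cyl_interval_iff by auto
  then have "\<bar>position (code x) - x\<bar> \<le> 0"
    using LIMSEQ_le_const[OF prefix_weight_tendsto_0[OF code_in_L[OF x]]] by blast
  then show ?thesis by simp
qed

lemma code_less_if_less_position:
  assumes "z \<in> L" "0 \<le> x" "x < position z"
  shows "word_less (code x) z"
proof -
  have x1: "x < 1" using assms position_bounds[of z] by linarith
  obtain l where l: "x < offset (map z [0..<l])"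
    using assms(3) less_cSUP_iff[OF UNIV_not_empty bdd_above_prefix_offsets] unfolding position_def
    by blast
  define u where "u = map z [0..<l]"
  define v where "v = map (code x) [0..<l]"
  have v: "x \<in> cyl_interval v" unfolding v_def by (rule prefix_code_in_cyl_interval[OF assms(2) x1])
  have len: "length v = length u" unfolding u_def v_def by simp
  have "\<not> list_lex_less u v"
    using cyl_end_le_offset[OF len[symmetric]] v l M_nonneg[of u]
    unfolding u_def mem_cyl_interval_iff by fastforce
  moreover have "v \<noteq> u" using v l unfolding mem_cyl_interval_iff u_def by auto
  ultimately have "list_lex_less v u" using list_lex_less_total[OF len] by blast
  then show ?thesis using word_less_iff_prefix u_def v_def by blast
qed

lemma less_code_if_position_less:
  assumes "z \<in> L" "x < 1" "position z < x"
  shows "word_less z (code x)"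
proof -
  have x0: "0 \<le> x" using assms position_bounds[of z] by linarith
  obtain l where l: "M (map z [0..<l]) < x - position z"
    using eventually_prefix_weight_less[OF assms(1), of "x - position z"] assms by auto
  define u where "u = map z [0..<l]"
  define v where "v = map (code x) [0..<l]"
  have v: "x \<in> cyl_interval v" unfolding v_def by (rule prefix_code_in_cyl_interval[OF x0 assms(2)])
  have u: "offset u + M u < x" using offset_prefix_le_position[of z l] l unfolding u_def by simp
  have len: "length v = length u" unfolding u_def v_def by simp
  have "\<not> list_lex_less v u"
    using cyl_end_le_offset[OF len] v u M_nonneg[of u] unfolding mem_cyl_interval_iff by fastforce
  moreover have "v \<noteq> u" using v u unfolding mem_cyl_interval_iff by auto
  ultimately have "list_lex_less u v" using list_lex_less_total[OF len] by blast
  then show ?thesis using word_less_iff_prefix u_def v_def by blast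
qed

lemma lower_set_in_sets_mu: "z \<in> L \<Longrightarrow> {w \<in> L. word_le w z} \<in> sets mu"
proof -
  assume "z \<in> L"
  have "{w \<in> L. word_le w z} = L \<inter> ({z} \<union> {w. word_less w z})" unfolding word_le_def by auto
  moreover have "{z} \<union> {w. word_less w z} \<in> sets borel"
    using finite_imp_closed_words[of "{z}"] open_word_less by (intro sets.Un borel_closed borel_open) auto
  ultimately show ?thesis
    unfolding sets_mu sets_restrict_borel_L_iff using borel_closed[OF L_closed] by auto
qed

text \<open>Up to the endpoint, \<open>code -` [w\<^sub>min, z]\<close> is the interval \<open>[0, position z)\<close>.\<close>

lemma phi_mu_eq_position: "z \<in> L \<Longrightarrow> phi_mu L mu z = position z"
proof -
  assume z: "z \<in> L"
  have wi: "word_interval L (word_min L) z = {w \<in> L. word_le w z}"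
    unfolding word_interval_def word_min_L using code_0_least by auto
  define S where "S = code -` {w \<in> L. word_le w z} \<inter> {0..<1}"
  have pm: "phi_mu L mu z = measure lborel S"
    unfolding phi_mu_def wi S_def by (rule measure_mu[OF lower_set_in_sets_mu[OF z]])
  have "S \<in> sets lebesgue_01" unfolding S_def
    using measurable_sets[OF measurable_code, of "{w \<in> L. word_le w z}"]
      lower_set_in_sets_mu[OF z] sets_mu space_lebesgue_01
    by simp
  then have S: "S \<in> sets lborel" unfolding lebesgue_01_def
    by (subst (asm) sets_restrict_space_iff) auto
  have bounds: "0 \<le> position z" "position z \<le> 1" by (rule position_bounds)+
  have lower: "{0..<position z} \<subseteq> S" unfolding S_def
    using code_less_if_less_position[OF z] code_in_L bounds by (auto simp: word_le_def)
  have upper: "S \<subseteq> {0..position z}"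
  proof
    fix x assume "x \<in> S"
    then have x: "0 \<le> x" "x < 1" "word_le (code x) z" unfolding S_def by auto
    have "x \<le> position z"
    proof (rule ccontr)
      assume "\<not> x \<le> position z"
      then have "word_less z (code x)" using less_code_if_position_less[OF z x(2)] by simp
      then show False using x(3) word_less_asym word_less_irrefl unfolding word_le_def by blast
    qed
    then show "x \<in> {0..position z}" using x by simp
  qed
  have "S \<in> fmeasurable lborel"
    by (rule fmeasurableI2[OF _ upper S]) (simp add: fmeasurable_compact)
  then have "measure lborel {0..<position z} \<le> measure lborel S"
    by (intro measure_mono_fmeasurable[OF lower]) simp_all
  moreover have "measure lborel S \<le> measure lborel {0..position z}"
    by (rule measure_mono_fmeasurable[OF upper S]) (simp add: fmeasurable_compact)
  ultimately have "measure lborel S = position z" using bounds by (simp add: measure_def)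
  then show ?thesis using pm by simp
qed

lemma code_unique:
  assumes x: "0 \<le> x" "x < 1" "x \<notin> range offset" and z: "z \<in> L" "phi_mu L mu z = x"
  shows "z = code x"
proof (rule ccontr)
  assume "z \<noteq> code x"
  then consider "word_less z (code x)" | "word_less (code x) z" using word_less_total by blast
  then show False
  proof cases
    case 1
    then obtain l where "list_lex_less (map z [0..<l]) (map (code x) [0..<l])"
      using word_less_iff_prefix by blast
    then have "offset (map z [0..<l]) + M (map z [0..<l]) \<le> offset (map (code x) [0..<l])"
      by (intro cyl_end_le_offset) auto
    moreover have "offset (map (code x) [0..<l]) \<le> x"
      using prefix_code_in_cyl_interval[OF x(1,2), of l] unfolding mem_cyl_interval_iff by simp
    moreover have "x \<le> offset (map z [0..<l]) + M (map z [0..<l])"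
      using position_le_cyl_end[of z l] phi_mu_eq_position z by simp
    ultimately have "offset (map (code x) [0..<l]) = x" by simp
    then show False using x(3) by (metis rangeI)
  next
    case 2
    then obtain l where "list_lex_less (map (code x) [0..<l]) (map z [0..<l])"
      using word_less_iff_prefix by blast
    then have "offset (map (code x) [0..<l]) + M (map (code x) [0..<l]) \<le> offset (map z [0..<l])"
      by (intro cyl_end_le_offset) auto
    moreover have "x < offset (map (code x) [0..<l]) + M (map (code x) [0..<l])"
      using prefix_code_in_cyl_interval[OF x(1,2), of l] unfolding mem_cyl_interval_iff by simp
    moreover have "offset (map z [0..<l]) \<le> x"
      using offset_prefix_le_position[of z l] phi_mu_eq_position z by simp
    ultimately show False by simp
  qed
qed

lemma phi_hat_code:
  assumes x: "0 \<le> x" "x < 1" "x \<notin> range offset"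
  shows "phi_hat L mu (code x) = (x, True)"
proof -
  have pm: "phi_mu L mu (code x) = x"
    using phi_mu_eq_position[OF code_in_L] position_code x by simp
  have "\<not> (\<exists>w'. word_less (code x) w' \<and>
      {v \<in> L. phi_mu L mu v = phi_mu L mu (code x)} = {code x, w'})"
  proof
    assume "\<exists>w'. word_less (code x) w' \<and> {v \<in> L. phi_mu L mu v = phi_mu L mu (code x)} = {code x, w'}"
    then obtain w' where w': "word_less (code x) w'"
      "{v \<in> L. phi_mu L mu v = phi_mu L mu (code x)} = {code x, w'}"
      by blast
    then have "w' \<in> L" "phi_mu L mu w' = x" using pm by auto
    then have "w' = code x" using code_unique x by blast
    then show False using w'(1) word_less_irrefl by simp
  qed
  then show ?thesis unfolding phi_hat_def using pm by simp
qed

lemma T_L_eq_position: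
  assumes x: "0 \<le> x" "x < 1" "x \<notin> range offset"
  shows "T_L L mu x = position (shift (code x))"
proof -
  have "inv_into L (phi_hat L mu) (x, True) = code x"
    unfolding inv_into_def
  proof (rule some_equality)
    fix y assume y: "y \<in> L \<and> phi_hat L mu y = (x, True)"
    then have "phi_mu L mu y = x" unfolding phi_hat_def by (auto split: if_splits)
    then show "y = code x" using code_unique x y by blast
  qed (use code_in_L phi_hat_code x in simp)
  then have "T_L L mu x = fst (phi_hat L mu (shift (code x)))"
    unfolding T_L_def T_hat_def kappa_def iota_def by simp
  also have "\<dots> = position (shift (code x))"
    unfolding phi_hat_def using phi_mu_eq_position shift_in_L code_in_L x by simp
  finally show ?thesis .
qed

end

section \<open>Lexicographic ranks of factors and the maps \<open>T\<^sub>n\<close>\<close>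

context shift_space
begin

text \<open>The factors of length \<open>m\<close> with prefix \<open>u\<close> are those of ranks \<open>count_below m u\<close> up to
  \<open>count_below m u + p\<^sub>L(u, m) - 1\<close>.\<close>

definition count_below :: "nat \<Rightarrow> nat list \<Rightarrow> nat" where
  "count_below m u = card {v \<in> Fact L m. list_lex_less (take (length u) v) u}"

lemma count_below_Nil: "count_below m [] = 0"
  unfolding count_below_def list_lex_less_def by simp

lemma list_lex_less_take_snoc_iff:
  assumes "v \<in> Fact L m" "length u < m"
  shows "list_lex_less (take (Suc (length u)) v) (u @ [a]) \<longleftrightarrow>
    list_lex_less (take (length u) v) u \<or> (\<exists>b<a. take (Suc (length u)) v = u @ [b])"
proof -
  have "take (Suc (length u)) v = take (length u) v @ [v ! length u]"
    using assms length_Fact by (simp add: take_Suc_conv_app_nth)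
  then show ?thesis using list_lex_less_snoc_iff[of "take (length u) v" u] assms length_Fact
    by auto
qed

lemma count_below_snoc:
  assumes "length u < m"
  shows "count_below m (u @ [a]) = count_below m u + (\<Sum>b<a. pL_pref L (u @ [b]) m)"
proof -
  let ?A = "{v \<in> Fact L m. list_lex_less (take (length u) v) u}"
  have eq: "{v \<in> Fact L m. list_lex_less (take (length (u @ [a])) v) (u @ [a])}
      = ?A \<union> (\<Union>b<a. Fact_pref L (u @ [b]) m)"
    using list_lex_less_take_snoc_iff[OF _ assms] unfolding Fact_pref_def by auto
  have "take (length u) v = u" if "v \<in> Fact_pref L (u @ [b]) m" for v b
  proof -
    have "take (length u) v = take (length u) (take (Suc (length u)) v)" by simp
    also have "\<dots> = u" using that unfolding Fact_pref_def by simp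
    finally show ?thesis .
  qed
  then have disj: "?A \<inter> (\<Union>b<a. Fact_pref L (u @ [b]) m) = {}"
    using list_lex_less_irrefl by fastforce
  show ?thesis unfolding count_below_def eq
    by (subst card_Un_disjoint) (use finite_Fact disj finite_Fact_pref card_UN_Fact_pref_snoc in auto)
qed

lemma fact_of_rank:
  assumes "r < pL L m"
  shows "fact_of_rank L m r \<in> Fact L m" and "fact_rank L m (fact_of_rank L m r) = r"
proof -
  have bij: "bij_betw (fact_rank L m) (Fact L m) {0..<card (Fact L m)}"
    unfolding fact_rank_def
  proof (rule bij_betw_rank[OF finite_Fact])
    show "\<forall>p\<in>Fact L m. \<forall>q\<in>Fact L m. \<forall>t\<in>Fact L m. list_lex_less p q \<longrightarrow> list_lex_less q t \<longrightarrow> list_lex_less p t"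
      using list_lex_less_trans length_Fact by metis
    show "\<forall>p. \<not> list_lex_less p p" using list_lex_less_irrefl by blast
    show "\<forall>p\<in>Fact L m. \<forall>q\<in>Fact L m. p \<noteq> q \<longrightarrow> list_lex_less p q \<or> list_lex_less q p"
      using list_lex_less_total length_Fact by metis
  qed
  have "\<exists>!v. v \<in> Fact L m \<and> fact_rank L m v = r"
  proof -
    have "r \<in> fact_rank L m ` Fact L m"
      using bij_betw_imp_surj_on[OF bij] assms unfolding pL_def by simp
    then obtain v where v: "v \<in> Fact L m" "fact_rank L m v = r" by auto
    moreover have "v' = v" if "v' \<in> Fact L m" "fact_rank L m v' = r" for v'
      using inj_onD[OF bij_betw_imp_inj_on[OF bij]] that v by simp
    ultimately show ?thesis by blast
  qed
  then have "fact_of_rank L m r \<in> Fact L m \<and> fact_rank L m (fact_of_rank L m r) = r"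
    unfolding fact_of_rank_def by (rule theI')
  then show "fact_of_rank L m r \<in> Fact L m" and "fact_rank L m (fact_of_rank L m r) = r" by auto
qed

lemma count_below_le_fact_rank:
  assumes "v \<in> Fact L m" "take l v = u" "l \<le> m"
  shows "count_below m u \<le> fact_rank L m v"
proof -
  have lu: "length u = l" using assms length_Fact by auto
  have "{v' \<in> Fact L m. list_lex_less (take l v') u} \<subseteq> {v' \<in> Fact L m. list_lex_less v' v}"
    using list_lex_less_of_take length_Fact assms by (metis (mono_tags, lifting) Collect_mono)
  then show ?thesis unfolding count_below_def fact_rank_def lu using finite_Fact by (intro card_mono) auto
qed

lemma fact_rank_less_count_below:
  assumes "v \<in> Fact L m" "take l v = u" "l \<le> m"
  shows "fact_rank L m v < count_below m u + pL_pref L u m"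
proof -
  have lu: "length u = l" using assms length_Fact by auto
  let ?A = "{v' \<in> Fact L m. list_lex_less (take l v') u}"
  let ?B = "Fact_pref L u m"
  have sub: "{v' \<in> Fact L m. list_lex_less v' v} \<subseteq> (?A \<union> ?B) - {v}"
  proof
    fix v' assume v': "v' \<in> {v' \<in> Fact L m. list_lex_less v' v}"
    then have vF: "v' \<in> Fact L m" "list_lex_less v' v" by auto
    have "\<not> list_lex_less (take l v) (take l v')"
      using list_lex_less_of_take list_lex_less_asym vF length_Fact assms by metis
    moreover have "length (take l v') = length u" using vF length_Fact assms lu by simp
    ultimately have "list_lex_less (take l v') u \<or> take l v' = u"
      using list_lex_less_total assms(2) by metis
    moreover have "v' \<noteq> v" using vF list_lex_less_irrefl by blast
    ultimately show "v' \<in> (?A \<union> ?B) - {v}" using vF unfolding Fact_pref_def lu by auto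
  qed
  have vB: "v \<in> ?A \<union> ?B" using assms unfolding Fact_pref_def lu by auto
  have fin: "finite (?A \<union> ?B)" using finite_Fact finite_Fact_pref by simp
  have "fact_rank L m v \<le> card ((?A \<union> ?B) - {v})"
    unfolding fact_rank_def by (rule card_mono) (use fin sub in auto)
  also have "\<dots> < card (?A \<union> ?B)" by (rule card_Diff1_less[OF fin vB])
  also have "\<dots> \<le> card ?A + card ?B" by (rule card_Un_le)
  finally show ?thesis unfolding count_below_def pL_pref_def lu .
qed

lemma count_below_add_pL_pref_le:
  assumes "length u1 = l" "length u2 = l" "list_lex_less u1 u2" "l \<le> m"
  shows "count_below m u1 + pL_pref L u1 m \<le> count_below m u2"
proof -
  let ?A = "{v' \<in> Fact L m. list_lex_less (take l v') u1}"
  let ?B = "Fact_pref L u1 m"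
  have "?A \<union> ?B \<subseteq> {v' \<in> Fact L m. list_lex_less (take l v') u2}"
  proof
    fix v assume "v \<in> ?A \<union> ?B"
    then have vF: "v \<in> Fact L m" and c: "list_lex_less (take l v) u1 \<or> take l v = u1"
      unfolding Fact_pref_def assms(1) by auto
    have "length (take l v) = l" using vF length_Fact assms by simp
    then have "list_lex_less (take l v) u2" using c list_lex_less_trans assms by metis
    then show "v \<in> {v' \<in> Fact L m. list_lex_less (take l v') u2}" using vF by simp
  qed
  moreover have "?A \<inter> ?B = {}" unfolding Fact_pref_def assms(1) using list_lex_less_irrefl by auto
  ultimately have "card ?A + card ?B \<le> card {v' \<in> Fact L m. list_lex_less (take l v') u2}"
    using finite_Fact finite_Fact_pref card_Un_disjoint card_mono
    by (metis (no_types, lifting) finite_Un mem_Collect_eq finite_subset subsetI)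
  then show ?thesis unfolding count_below_def pL_pref_def assms(1,2) .
qed

lemma take_eq_if_fact_rank_between:
  assumes "v \<in> Fact L m" "length u = l" "l \<le> m"
    and "count_below m u \<le> fact_rank L m v" "fact_rank L m v < count_below m u + pL_pref L u m"
  shows "take l v = u"
proof (rule ccontr)
  assume ne: "take l v \<noteq> u"
  have lt: "length (take l v) = l" using assms length_Fact by simp
  then consider "list_lex_less (take l v) u" | "list_lex_less u (take l v)"
    using list_lex_less_total ne assms(2) by metis
  then show False
  proof cases
    case 1
    then show False
      using count_below_add_pL_pref_le[OF lt assms(2) 1 assms(3)]
        fact_rank_less_count_below[OF assms(1) refl assms(3)] assms(4) by simp
  next
    case 2
    then show False
      using count_below_add_pL_pref_le[OF assms(2) lt 2 assms(3)]
        count_below_le_fact_rank[OF assms(1) refl assms(3)] assms(5) by simp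
  qed
qed

text \<open>\<open>T\<^sub>m\<close> maps the block of intervals \<open>J\<^sub>v\<close> with \<open>v\<close> starting with \<open>u\<close> into the block of the
  intervals \<open>J'\<^sub>v\<^sub>'\<close> with \<open>v'\<close> starting with \<open>tl u\<close>.\<close>

lemma T_map_in_tl_block:
  assumes "length u = Suc l" "Suc l \<le> m" "0 \<le> x" "x < 1"
    and lower: "real (count_below m u) / real (pL L m) \<le> x"
    and upper: "x < real (count_below m u + pL_pref L u m) / real (pL L m)"
  shows "real (count_below (m - 1) (tl u)) / real (pL L (m - 1)) \<le> T_map L m x"
    and "T_map L m x < real (count_below (m - 1) (tl u) + pL_pref L (tl u) (m - 1)) / real (pL L (m - 1))"
proof -
  define P where "P = real (pL L m)"
  define P' where "P' = real (pL L (m - 1))"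
  have P: "P > 0" "P' > 0" unfolding P_def P'_def using pL_pos by auto
  define r where "r = nat \<lfloor>x * P\<rfloor>"
  have r: "real r \<le> x * P" "x * P < real r + 1"
    unfolding r_def using assms(3) P by (auto simp: of_nat_nat)
  have "x * P < P" using assms(4) P by simp
  then have "r < pL L m" using r unfolding P_def by simp
  have rank: "count_below m u \<le> r" "r < count_below m u + pL_pref L u m"
    using lower upper r P unfolding P_def[symmetric] by (simp_all add: divide_le_eq less_divide_eq)
  define v where "v = fact_of_rank L m r"
  have v: "v \<in> Fact L m" "fact_rank L m v = r" using fact_of_rank[OF \<open>r < pL L m\<close>] v_def by auto
  have "take (Suc l) v = u"
    by (rule take_eq_if_fact_rank_between) (use assms(1,2) v rank in auto)
  then have "take l (tl v) = tl u" by (cases v) auto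
  moreover have "tl v \<in> Fact L (m - 1)" by (rule tl_Fact[OF v(1)])
  moreover have "l \<le> m - 1" using assms(2) by simp
  ultimately have R: "count_below (m - 1) (tl u) \<le> fact_rank L (m - 1) (tl v)"
    "fact_rank L (m - 1) (tl v) < count_below (m - 1) (tl u) + pL_pref L (tl u) (m - 1)"
    using count_below_le_fact_rank fact_rank_less_count_below by blast+
  have T: "T_map L m x = (real (fact_rank L (m - 1) (tl v)) + (x * P - real r)) / P'"
    unfolding T_map_def Let_def P_def[symmetric] r_def[symmetric] v_def[symmetric] P'_def ..
  show "real (count_below (m - 1) (tl u)) / real (pL L (m - 1)) \<le> T_map L m x"
    unfolding T P'_def[symmetric] using R(1) r P by (intro divide_right_mono) auto
  show "T_map L m x < real (count_below (m - 1) (tl u) + pL_pref L (tl u) (m - 1)) / real (pL L (m - 1))"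
    unfolding T P'_def[symmetric] using R(2) r P by (intro divide_strict_right_mono) auto
qed

end

section \<open>Limit frequencies of factors\<close>

lemma unit_cube_convergent_subseq:
  fixes X :: "nat \<Rightarrow> 'a::countable \<Rightarrow> real"
  assumes "\<And>i u. X i u \<in> {0..1}"
  shows "\<exists>r l. strict_mono r \<and> (\<forall>u. (\<lambda>i. X (r i) u) \<longlonglongrightarrow> l u)"
proof -
  let ?S = "PiE (UNIV :: 'a set) (\<lambda>_. {0..1::real})"
  have "compactin (product_topology (\<lambda>_. euclidean) UNIV) ?S"
    by (subst compactin_PiE) auto
  then have "compact ?S" by (simp add: euclidean_product_topology)
  then have "seq_compact ?S" by (rule compact_imp_seq_compact)
  moreover have "\<forall>i. X i \<in> ?S" using assms by auto
  ultimately obtain l r where "strict_mono r" "(X \<circ> r) \<longlonglongrightarrow> l"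
    unfolding seq_compact_def by blast
  moreover have "(\<lambda>i. X (r i) u) \<longlonglongrightarrow> l u" for u
  proof -
    have "continuous_on UNIV (\<lambda>x::'a \<Rightarrow> real. x u)" by simp
    from continuous_on_tendsto_compose[OF this \<open>(X \<circ> r) \<longlonglongrightarrow> l\<close>]
    show ?thesis by (simp add: comp_def)
  qed
  ultimately show ?thesis by blast
qed

lemma abs_diff_ratios_le:
  fixes a b P Q :: real
  assumes "0 \<le> b" "b \<le> a" "a - b \<le> P - Q" "b \<le> Q" "0 < Q" "Q \<le> P"
  shows "\<bar>a / P - b / Q\<bar> \<le> 1 - Q / P"
proof -
  have P: "P > 0" using assms by linarith
  have e: "a / P - b / Q = (a - b) / P - b * (P - Q) / (P * Q)"
    using P assms(5) by (simp add: field_simps)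
  have t1: "0 \<le> (a - b) / P" using assms P by (intro divide_nonneg_pos) auto
  have t1': "(a - b) / P \<le> (P - Q) / P" using assms P by (intro divide_right_mono) auto
  have "b * (P - Q) \<le> Q * (P - Q)" using assms by (intro mult_right_mono) auto
  then have "b * (P - Q) / (P * Q) \<le> Q * (P - Q) / (P * Q)" using P assms(5)
    by (intro divide_right_mono) auto
  also have "\<dots> = (P - Q) / P" using P assms(5) by (simp add: field_simps)
  finally have t2': "b * (P - Q) / (P * Q) \<le> (P - Q) / P" .
  have t2: "0 \<le> b * (P - Q) / (P * Q)" using assms P by (intro divide_nonneg_pos) auto
  have "(P - Q) / P = 1 - Q / P" using P by (simp add: field_simps)
  then show ?thesis using e t1 t1' t2 t2' by (simp add: abs_le_iff)
qed

locale freq_limit = minimal_aperiodic_shift +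
  fixes n :: "nat \<Rightarrow> nat" and r :: "nat \<Rightarrow> nat" and Mu :: "nat list \<Rightarrow> real"
  assumes n_ge_2: "\<And>s. n s \<ge> 2"
    and pL_ratio_tendsto: "(\<lambda>s. real (pL L (n s)) / real (pL L (n s - 1))) \<longlonglongrightarrow> 1"
    and strict_mono_r: "strict_mono r"
    and freq_tendsto: "\<And>u. (\<lambda>i. real (pL_pref L u (n (r i))) / real (pL L (n (r i)))) \<longlonglongrightarrow> Mu u"
begin

text \<open>Since \<open>p\<^sub>L\<close> is strictly increasing, \<open>p\<^sub>L(n)/p\<^sub>L(n - 1) \<ge> 1 + 1/p\<^sub>L(C)\<close> whenever \<open>n \<le> C\<close>.\<close>

lemma filterlim_n: "filterlim n at_top sequentially"
proof (subst filterlim_at_top, intro allI)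
  fix C :: nat
  define d where "d = 1 / real (pL L C)"
  have "d > 0" using pL_pos unfolding d_def by simp
  with pL_ratio_tendsto have "\<forall>\<^sub>F s in sequentially. dist (real (pL L (n s)) / real (pL L (n s - 1))) 1 < d"
    by (rule tendstoD)
  then show "\<forall>\<^sub>F s in sequentially. C \<le> n s"
  proof (rule eventually_mono)
    fix s assume ds: "dist (real (pL L (n s)) / real (pL L (n s - 1))) 1 < d"
    show "C \<le> n s"
    proof (rule ccontr)
      assume "\<not> C \<le> n s"
      have "pL L (n s - 1) < pL L (Suc (n s - 1))" by (rule pL_less_pL_Suc)
      also have "Suc (n s - 1) = n s" using n_ge_2[of s] by simp
      finally have lt: "real (pL L (n s - 1)) + 1 \<le> real (pL L (n s))" by simp
      have q: "real (pL L (n s - 1)) > 0" using pL_pos by simp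
      have "real (pL L (n s - 1)) \<le> real (pL L C)" using pL_mono \<open>\<not> C \<le> n s\<close> by simp
      then have "1 + d \<le> 1 + 1 / real (pL L (n s - 1))" unfolding d_def using q by (simp add: frac_le)
      also have "\<dots> = (real (pL L (n s - 1)) + 1) / real (pL L (n s - 1))" using q by (simp add: field_simps)
      also have "\<dots> \<le> real (pL L (n s)) / real (pL L (n s - 1))" using lt q by (simp add: divide_right_mono)
      finally show False using ds by (simp add: dist_real_def)
    qed
  qed
qed

lemma eventually_n_r_ge: "\<forall>\<^sub>F i in sequentially. c \<le> n (r i)"
  using filterlim_compose[OF filterlim_n filterlim_subseq[OF strict_mono_r]]
  by (simp add: filterlim_at_top comp_def)

lemma filterlim_n_r: "filterlim (\<lambda>i. n (r i)) at_top sequentially"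
  using eventually_n_r_ge by (simp add: filterlim_at_top)

lemma filterlim_n_r_pred: "filterlim (\<lambda>i. n (r i) - 1) at_top sequentially"
  unfolding filterlim_at_top
proof
  fix C show "\<forall>\<^sub>F i in sequentially. C \<le> n (r i) - 1"
    using eventually_n_r_ge[of "Suc C"] by (rule eventually_mono) simp
qed

lemma tendsto_if_close:
  fixes A B :: "nat \<Rightarrow> real"
  assumes "\<forall>\<^sub>F i in sequentially. \<bar>A i - B i\<bar> \<le> 1 - real (pL L (n (r i) - 1)) / real (pL L (n (r i)))"
    and "A \<longlonglongrightarrow> l"
  shows "B \<longlonglongrightarrow> l"
proof -
  have "(\<lambda>s. inverse (real (pL L (n s)) / real (pL L (n s - 1)))) \<longlonglongrightarrow> inverse 1"
    by (rule tendsto_inverse[OF pL_ratio_tendsto]) simp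
  then have "(\<lambda>s. real (pL L (n s - 1)) / real (pL L (n s))) \<longlonglongrightarrow> 1"
    by (simp only: inverse_divide inverse_1)
  from LIMSEQ_subseq_LIMSEQ[OF this strict_mono_r]
  have "(\<lambda>i. real (pL L (n (r i) - 1)) / real (pL L (n (r i)))) \<longlonglongrightarrow> 1" by (simp add: comp_def)
  then have "(\<lambda>i. 1 - real (pL L (n (r i) - 1)) / real (pL L (n (r i)))) \<longlonglongrightarrow> 1 - 1"
    by (intro tendsto_diff tendsto_const)
  then have "(\<lambda>i. 1 - real (pL L (n (r i) - 1)) / real (pL L (n (r i)))) \<longlonglongrightarrow> 0" by simp
  then have "(\<lambda>i. A i - B i) \<longlonglongrightarrow> 0"
    by (rule Lim_null_comparison[rotated]) (use assms(1) in simp)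
  from tendsto_diff[OF assms(2) this] show ?thesis by simp
qed

lemma Mu_nonneg: "Mu u \<ge> 0"
  by (rule LIMSEQ_le_const[OF freq_tendsto]) simp

lemma Mu_Nil: "Mu [] = 1"
proof -
  have "(\<lambda>i. real (pL_pref L [] (n (r i))) / real (pL L (n (r i)))) = (\<lambda>i. 1)"
    by (simp add: pL_pref_Nil pL_pos[THEN gr_implies_not0])
  then show ?thesis using freq_tendsto[of "[]"] LIMSEQ_const_iff by metis
qed

lemma Mu_non_factor: "u \<notin> Facts L \<Longrightarrow> Mu u = 0"
  using freq_tendsto[of u] by (simp add: pL_pref_def Fact_pref_non_factor LIMSEQ_const_iff)

lemma Mu_eq_sum_snoc: "Mu u = (\<Sum>a<k. Mu (u @ [a]))"
proof -
  have "\<forall>\<^sub>F i in sequentially. (\<Sum>a<k. real (pL_pref L (u @ [a]) (n (r i))) / real (pL L (n (r i))))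
      = real (pL_pref L u (n (r i))) / real (pL L (n (r i)))"
    using eventually_n_r_ge[of "Suc (length u)"]
    by (rule eventually_mono) (simp add: pL_pref_split_right sum_divide_distrib)
  then have "(\<lambda>i. real (pL_pref L u (n (r i))) / real (pL L (n (r i)))) \<longlonglongrightarrow> (\<Sum>a<k. Mu (u @ [a]))"
    using Lim_transform_eventually[OF tendsto_sum[OF freq_tendsto]] by fast
  then show ?thesis using freq_tendsto LIMSEQ_unique by blast
qed

text \<open>By the counting bounds at consecutive lengths, the frequencies at the lengths \<open>n - 1\<close>
  have the same limits.\<close>

lemma freq_pred_tendsto:
  "(\<lambda>i. real (pL_pref L u (n (r i) - 1)) / real (pL L (n (r i) - 1))) \<longlonglongrightarrow> Mu u"
proof (rule tendsto_if_close[OF _ freq_tendsto])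
  show "\<forall>\<^sub>F i in sequentially. \<bar>real (pL_pref L u (n (r i))) / real (pL L (n (r i))) -
      real (pL_pref L u (n (r i) - 1)) / real (pL L (n (r i) - 1))\<bar>
    \<le> 1 - real (pL L (n (r i) - 1)) / real (pL L (n (r i)))"
    using eventually_n_r_ge[of "Suc (length u)"]
  proof (rule eventually_mono)
    fix i assume a: "Suc (length u) \<le> n (r i)"
    then obtain m where m: "n (r i) = Suc m" "length u \<le> m" by (cases "n (r i)") auto
    show "\<bar>real (pL_pref L u (n (r i))) / real (pL L (n (r i))) -
      real (pL_pref L u (n (r i) - 1)) / real (pL L (n (r i) - 1))\<bar>
      \<le> 1 - real (pL L (n (r i) - 1)) / real (pL L (n (r i)))"
      unfolding m(1) diff_Suc_1
      by (rule abs_diff_ratios_le)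
        (use pL_pref_Suc[OF m(2)] pL_pref_le_pL[of u m] pL_pos[of m] pL_mono[of m "Suc m"] in auto)
  qed
qed

lemma Mu_eq_sum_Cons: "Mu u = (\<Sum>a<k. Mu (a # u))"
proof -
  have "(\<lambda>i. real (pL_pref L u (n (r i) - 1)) / real (pL L (n (r i) - 1))) \<longlonglongrightarrow> (\<Sum>a<k. Mu (a # u))"
  proof (rule tendsto_if_close[OF _ tendsto_sum[OF freq_tendsto]])
    show "\<forall>\<^sub>F i in sequentially. \<bar>(\<Sum>a<k. real (pL_pref L (a # u) (n (r i))) / real (pL L (n (r i)))) -
      real (pL_pref L u (n (r i) - 1)) / real (pL L (n (r i) - 1))\<bar>
    \<le> 1 - real (pL L (n (r i) - 1)) / real (pL L (n (r i)))"
      using eventually_n_r_ge[of "Suc (length u)"]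
    proof (rule eventually_mono)
      fix i assume a: "Suc (length u) \<le> n (r i)"
      then obtain m where m: "n (r i) = Suc m" "length u \<le> m" by (cases "n (r i)") auto
      note bounds = pL_pref_Suc_left[OF m(2)]
      have "real (pL_pref L u m) \<le> real (\<Sum>a<k. pL_pref L (a # u) (Suc m))"
        "real (\<Sum>a<k. pL_pref L (a # u) (Suc m)) + real (pL L m) \<le> real (pL L (Suc m)) + real (pL_pref L u m)"
        using bounds by (simp_all only: of_nat_le_iff of_nat_add[symmetric])
      then show "\<bar>(\<Sum>a<k. real (pL_pref L (a # u) (n (r i))) / real (pL L (n (r i)))) -
        real (pL_pref L u (n (r i) - 1)) / real (pL L (n (r i) - 1))\<bar>
        \<le> 1 - real (pL L (n (r i) - 1)) / real (pL L (n (r i)))"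
        unfolding m(1) diff_Suc_1 sum_divide_distrib[symmetric] of_nat_sum[symmetric]
        by (intro abs_diff_ratios_le) (use pL_pref_le_pL[of u m] pL_pos[of m] pL_mono[of m "Suc m"] in auto)
    qed
  qed
  then show ?thesis using freq_pred_tendsto LIMSEQ_unique by blast
qed

sublocale cylinder_weights k L Mu
proof unfold_locales
  show "0 \<le> Mu u" "Mu u = (\<Sum>a<k. Mu (u @ [a]))" "Mu u = (\<Sum>a<k. Mu (a # u))" for u
    by (rule Mu_nonneg Mu_eq_sum_snoc Mu_eq_sum_Cons)+
  show "Mu [] = 1" by (rule Mu_Nil)
  show "u \<notin> Facts L \<Longrightarrow> Mu u = 0" for u by (rule Mu_non_factor)
qed

lemma block_bounds_tendsto:
  assumes N: "filterlim N at_top sequentially"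
    and freq: "\<And>u. (\<lambda>i. real (pL_pref L u (N i)) / real (pL L (N i))) \<longlonglongrightarrow> Mu u"
  shows "(\<lambda>i. real (count_below (N i) u) / real (pL L (N i))) \<longlonglongrightarrow> offset u"
    and "(\<lambda>i. real (count_below (N i) u + pL_pref L u (N i)) / real (pL L (N i))) \<longlonglongrightarrow> offset u + Mu u"
proof -
  show lo: "(\<lambda>i. real (count_below (N i) u) / real (pL L (N i))) \<longlonglongrightarrow> offset u"
  proof (induction u rule: rev_induct)
    case (snoc a u)
    have "\<forall>\<^sub>F i in sequentially. real (count_below (N i) u) / real (pL L (N i))
        + (\<Sum>b<a. real (pL_pref L (u @ [b]) (N i)) / real (pL L (N i)))
      = real (count_below (N i) (u @ [a])) / real (pL L (N i))"
      using N unfolding filterlim_at_top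
      by (rule eventually_mono[OF spec[of _ "Suc (length u)"]])
        (simp add: count_below_snoc add_divide_distrib sum_divide_distrib)
    from Lim_transform_eventually[OF tendsto_add[OF snoc tendsto_sum[OF freq]] this]
    show ?case using offset_snoc by simp
  qed (simp add: count_below_Nil)
  show "(\<lambda>i. real (count_below (N i) u + pL_pref L u (N i)) / real (pL L (N i))) \<longlonglongrightarrow> offset u + Mu u"
    using tendsto_add[OF lo freq] by (simp add: add_divide_distrib)
qed

lemmas block_bounds_tendsto_n = block_bounds_tendsto[OF filterlim_n_r freq_tendsto]
lemmas block_bounds_tendsto_pred = block_bounds_tendsto[OF filterlim_n_r_pred freq_pred_tendsto]

lemma T_map_tendsto:
  assumes x: "0 \<le> x" "x < 1" "x \<notin> range offset"
  shows "(\<lambda>i. T_map L (n (r i)) x) \<longlonglongrightarrow> position (shift (code x))"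
proof (rule tendstoI)
  fix e :: real assume e: "e > 0"
  define z where "z = shift (code x)"
  have "z \<in> L" unfolding z_def using code_in_L x shift_in_L by simp
  then obtain l where small: "Mu (map z [0..<l]) < e / 2"
    using eventually_prefix_weight_less[of z "e / 2"] e by auto
  define u where "u = map (code x) [0..<Suc l]"
  have tl_u: "tl u = map z [0..<l]" unfolding u_def z_def map_upt_Suc_shift by simp
  have "x \<in> cyl_interval u" unfolding u_def by (rule prefix_code_in_cyl_interval[OF x(1,2)])
  then have inside: "offset u < x" "x < offset u + Mu u"
    using x(3) unfolding mem_cyl_interval_iff by (auto simp: order_le_less)
  have position: "offset (tl u) \<le> position z" "position z \<le> offset (tl u) + Mu (tl u)"
    unfolding tl_u by (rule offset_prefix_le_position position_le_cyl_end)+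
  have e2: "offset (tl u) - e / 2 < offset (tl u)"
    "offset (tl u) + Mu (tl u) < offset (tl u) + Mu (tl u) + e / 2" using e by simp_all
  have "\<forall>\<^sub>F i in sequentially. Suc l \<le> n (r i) - 1"
    using filterlim_n_r_pred unfolding filterlim_at_top by blast
  moreover note order_tendstoD(2)[OF block_bounds_tendsto_n(1) inside(1)]
    order_tendstoD(1)[OF block_bounds_tendsto_n(2) inside(2)]
    order_tendstoD(1)[OF block_bounds_tendsto_pred(1) e2(1)]
    order_tendstoD(2)[OF block_bounds_tendsto_pred(2) e2(2)]
  ultimately show "\<forall>\<^sub>F i in sequentially. dist (T_map L (n (r i)) x) (position (shift (code x))) < e"
  proof eventually_elim
    case (elim i)
    have "length u = Suc l" "Suc l \<le> n (r i)" using elim(1) unfolding u_def by simp_all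
    note T = T_map_in_tl_block[OF this x(1,2) less_imp_le[OF elim(2)] elim(3)]
    have "Mu (tl u) < e / 2" using small tl_u by simp
    then have "\<bar>T_map L (n (r i)) x - position z\<bar> < e"
      using T elim(4,5) position unfolding abs_less_iff by linarith
    then show ?case unfolding z_def dist_real_def .
  qed
qed

end

lemma co_countable_unit_interval:
  fixes C :: "real set"
  assumes "countable C"
  shows "{0..<1} - C \<in> sets lebesgue" and "emeasure lebesgue ({0..<1} - ({0..<1} - C)) = 0"
proof -
  have "C \<in> null_sets lborel" by (rule countable_imp_null_set_lborel[OF assms])
  then show "{0..<1} - C \<in> sets lebesgue" by (intro sets.Diff) auto
  have "{0..<1} \<inter> C \<in> null_sets lborel"
    by (rule countable_imp_null_set_lborel) (use assms in auto)
  then have "{0..<1} - ({0..<1} - C) \<in> null_sets lebesgue"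
    using null_sets_completionI by (simp add: Diff_Diff_Int)
  then show "emeasure lebesgue ({0..<1} - ({0..<1} - C)) = 0" by auto
qed

theorem mainTheorem20:
  fixes k :: nat and L :: "word set" and n :: "nat \<Rightarrow> nat"
  assumes "minimal_shift k L"
      and "aperiodic_shift L"
      and "zero_entropy L"
      and "\<forall>s. n s \<ge> 2"
      and "(\<lambda>s. real (pL L (n s)) / real (pL L (n s - 1))) \<longlonglongrightarrow> 1"
  shows "\<exists>r :: nat \<Rightarrow> nat. \<exists>Mu :: nat list \<Rightarrow> real. \<exists>\<mu> :: word measure. \<exists>T :: real \<Rightarrow> real.
           strict_mono r \<and>
           (\<forall>u \<in> Facts L. (\<lambda>i. real (pL_pref L u (n (r i))) / real (pL L (n (r i)))) \<longlonglongrightarrow> Mu u) \<and>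
           borel_prob_on L \<mu> \<and> shift_invariant L \<mu> \<and> nonatomic L \<mu> \<and>
           (\<forall>u \<in> Facts L. measure \<mu> (Cyl L u) = Mu u) \<and>
           (\<exists>S. S \<subseteq> {0..<1} \<and> S \<in> sets lebesgue \<and> emeasure lebesgue ({0..<1} - S) = 0 \<and>
                (\<forall>x \<in> S. (\<lambda>i. T_map L (n (r i)) x) \<longlonglongrightarrow> T x)) \<and>
           (AE x in lebesgue. x \<in> {0..<1} \<longrightarrow> T x = T_L L \<mu> x)"
proof -
  interpret minimal_aperiodic_shift k L
    using assms(1,2) unfolding minimal_shift_def is_shift_def by unfold_locales blast+
  have "real (pL_pref L u (n s)) / real (pL L (n s)) \<in> {0..1}" for s u
    using pL_pref_le_pL[of u "n s"] pL_pos[of "n s"] by auto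
  then obtain r Mu where "strict_mono r"
    and "\<And>u. (\<lambda>i. real (pL_pref L u (n (r i))) / real (pL L (n (r i)))) \<longlonglongrightarrow> Mu u"
    using unit_cube_convergent_subseq[of "\<lambda>s u. real (pL_pref L u (n s)) / real (pL L (n s))"]
    by blast
  then interpret freq_limit k L n r Mu
    using assms(4,5) by unfold_locales blast+
  show ?thesis
  proof (intro exI[of _ r] exI[of _ Mu] exI[of _ mu] exI[of _ "T_L L mu"] conjI ballI)
    show "(\<lambda>i. real (pL_pref L u (n (r i))) / real (pL L (n (r i)))) \<longlonglongrightarrow> Mu u" for u
      by (rule freq_tendsto)
    show "\<exists>S. S \<subseteq> {0..<1} \<and> S \<in> sets lebesgue \<and> emeasure lebesgue ({0..<1} - S) = 0 \<and>
        (\<forall>x \<in> S. (\<lambda>i. T_map L (n (r i)) x) \<longlonglongrightarrow> T_L L mu x)"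
      using co_countable_unit_interval[of "range offset"] T_map_tendsto T_L_eq_position
      by (intro exI[of _ "{0..<1} - range offset"]) auto
  qed (use \<open>strict_mono r\<close> borel_prob_on_mu shift_invariant_mu nonatomic_mu measure_mu_Cyl in auto)
qed

end
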